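(* Given a linear-non-linear adjunction $\mathcal F\dashv\mathcal U$, define $\mathcal U^S:LS(\mathscr C)\to S(\mathscr C)$ by $\mathcal U^S(X,A):=(X,\mathcal U(A))$ and, for $(f,u):(X,A)\to(Y,B)$, $\mathcal U^S(f,u):=(f,(\eta_X\times\mathrm{id}_{\mathcal U(A)});n_{\mathcal F(X),A};\mathcal U(u))$. Then $\mathcal U^S$ is a functor and a split fibred functor from $\mathbf{ls}$ to $\mathbf s$ (i.e. $\mathbf s\circ\mathcal U^S=\mathbf{ls}$ and $\mathcal U^S$ sends the chosen cartesian morphisms of $\mathbf{ls}$ to those of $\mathbf s$). Moreover, on each fibre over $X$ it is a symmetric lax monoidal functor from $(LS(\mathscr C)_X,\otimes_X,(X,1))$ to $(S(\mathscr C)_X,\times_X,(X,I))$, with structure maps $(\mathrm{id}_X,\pi_2;n_I):(X,I)\to\mathcal U^S(X,1)$ and $(\mathrm{id}_X,\pi_2;n_{A,B}):\mathcal U^S(X,A)\times_X\mathcal U^S(X,B)\to\mathcal U^S((X,A)\otimes_X(X,B))$.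
   Context: Composition is diagrammatic; monoidal categories are strict. A linear-non-linear adjunction is a symmetric monoidal adjunction $\mathcal F\dashv\mathcal U$, $\mathcal F:\mathscr C\to\mathcal L$, between a cartesian category $(\mathscr C,\times,I)$ and a symmetric monoidal category $(\mathcal L,\otimes,1)$ (symmetry $\sigma$); $\mathcal U$ lax monoidal via $n_{A,B}:\mathcal U(A)\times\mathcal U(B)\to\mathcal U(A\otimes B)$, $n_I:I\to\mathcal U(1)$; $\mathcal F$ strong monoidal via isomorphisms $m_{X,Y}:\mathcal F(X)\otimes\mathcal F(Y)\to\mathcal F(X\times Y)$, $m_1:1\to\mathcal F(I)$; unit $\eta$. $\mathbf c_X:=\mathcal F(\Delta_X);m_{X,X}^{-1}$, $\mathbf w_X:=\mathcal F(t_X);m_1^{-1}$ with $t_X:X\to I$ terminal. Simple category $S(\mathscr C)$: objects $(X,J)$, $X,J\in\mathscr C$; morphisms $(f,u):(X,J)\to(Y,K)$ with $f:X\to Y$, $u:X\times J\to K$; composition $(f,u);(g,v)=(f;g,(\Delta_X\times\mathrm{id}_J);(f\times u);v)$, identity $(\mathrm{id}_X,\pi_2)$; split fibration $\mathbf s(f,u)=f$ with chosen cartesian morphisms $(f,\pi_2):(X,K)\to(Y,K)$; fibre $S(\mathscr C)_X$ (morphisms $(\mathrm{id}_X,u)$) has cartesian product $(X,J)\times_X(X,K)=(X,J\times K)$, unit $(X,I)$. Linear simple category $LS(\mathscr C)$: objects $(X,A)$, $X\in\mathscr C$, $A\in\mathcal L$; morphisms $(f,u):(X,A)\to(Y,B)$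 with $f:X\to Y$, $u:\mathcal F(X)\otimes A\to B$; composition $(f,u);(g,v)=(f;g,(\mathbf c_X\otimes\mathrm{id}_A);(\mathcal F(f)\otimes u);v)$, identity $(\mathrm{id}_X,\mathbf w_X\otimes\mathrm{id}_A)$; split fibration $\mathbf{ls}(f,u)=f$ with chosen cartesian morphisms $(f,\mathbf w_X\otimes\mathrm{id}_B):(X,B)\to(Y,B)$; fibre $LS(\mathscr C)_X$ has objects $(X,A)$, morphisms $(\mathrm{id}_X,u)$, and monoidal structure $(X,A)\otimes_X(X,B)=(X,A\otimes B)$, unit $(X,1)$, $(\mathrm{id}_X,u)\otimes_X(\mathrm{id}_X,v)=(\mathrm{id}_X,(\mathbf c_X\otimes\mathrm{id}_{A\otimes B});(\mathrm{id}_{\mathcal F(X)}\otimes\sigma_{\mathcal F(X),A}\otimes\mathrm{id}_B);(u\otimes v))$. *)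

theory Defs
  imports Main
begin

section \<open>Categories (explicit carriers, diagrammatic composition)\<close>

record ('o,'m) cat =
  cOb  :: "'o set"
  cAr  :: "'m set"
  cDom :: "'m \<Rightarrow> 'o"
  cCod :: "'m \<Rightarrow> 'o"
  cId  :: "'o \<Rightarrow> 'm"
  cCmp :: "'m \<Rightarrow> 'm \<Rightarrow> 'm"  \<comment> \<open>cCmp C f g = f;g (first f, then g)\<close>

definition hom :: "('o,'m,'x) cat_scheme \<Rightarrow> 'o \<Rightarrow> 'o \<Rightarrow> 'm set" where
  "hom C a b = {f \<in> cAr C. cDom C f = a \<and> cCod C f = b}"

definition category :: "('o,'m,'x) cat_scheme \<Rightarrow> bool" where
  "category C \<longleftrightarrow>
     (\<forall>f\<in>cAr C. cDom C f \<in> cOb C \<and> cCod C f \<in> cOb C) \<and>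
     (\<forall>a\<in>cOb C. cId C a \<in> hom C a a) \<and>
     (\<forall>f\<in>cAr C. \<forall>g\<in>cAr C. cCod C f = cDom C g \<longrightarrow>
         cCmp C f g \<in> hom C (cDom C f) (cCod C g)) \<and>
     (\<forall>f\<in>cAr C. cCmp C (cId C (cDom C f)) f = f \<and> cCmp C f (cId C (cCod C f)) = f) \<and>
     (\<forall>f\<in>cAr C. \<forall>g\<in>cAr C. \<forall>h\<in>cAr C. cCod C f = cDom C g \<longrightarrow> cCod C g = cDom C h \<longrightarrow>
         cCmp C (cCmp C f g) h = cCmp C f (cCmp C g h))"

definition inverse_arr :: "('o,'m,'x) cat_scheme \<Rightarrow> 'm \<Rightarrow> 'm \<Rightarrow> bool" where
  "inverse_arr C f g \<longleftrightarrow> f \<in> cAr C \<and> g \<in> cAr C \<and> cDom C g = cCod C f \<and> cCod C g = cDom C f \<and>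
     cCmp C f g = cId C (cDom C f) \<and> cCmp C g f = cId C (cCod C f)"

definition is_iso :: "('o,'m,'x) cat_scheme \<Rightarrow> 'm \<Rightarrow> bool" where
  "is_iso C f \<longleftrightarrow> (\<exists>g. inverse_arr C f g)"

definition inv_arr :: "('o,'m,'x) cat_scheme \<Rightarrow> 'm \<Rightarrow> 'm" where
  "inv_arr C f = (SOME g. inverse_arr C f g)"

definition is_functor :: "('o,'m,'x) cat_scheme \<Rightarrow> ('p,'n,'y) cat_scheme \<Rightarrow>
    ('o \<Rightarrow> 'p) \<Rightarrow> ('m \<Rightarrow> 'n) \<Rightarrow> bool" where
  "is_functor A B Fo Fm \<longleftrightarrow>
     (\<forall>a\<in>cOb A. Fo a \<in> cOb B) \<and>
     (\<forall>f\<in>cAr A. Fm f \<in> hom B (Fo (cDom A f)) (Fo (cCod A f))) \<and>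
     (\<forall>a\<in>cOb A. Fm (cId A a) = cId B (Fo a)) \<and>
     (\<forall>f\<in>cAr A. \<forall>g\<in>cAr A. cCod A f = cDom A g \<longrightarrow> Fm (cCmp A f g) = cCmp B (Fm f) (Fm g))"

definition nat_trans :: "('o,'m,'x) cat_scheme \<Rightarrow> ('p,'n,'y) cat_scheme \<Rightarrow>
    ('o \<Rightarrow> 'p) \<Rightarrow> ('m \<Rightarrow> 'n) \<Rightarrow> ('o \<Rightarrow> 'p) \<Rightarrow> ('m \<Rightarrow> 'n) \<Rightarrow> ('o \<Rightarrow> 'n) \<Rightarrow> bool" where
  "nat_trans A B Fo Fm Go Gm \<tau> \<longleftrightarrow>
     (\<forall>a\<in>cOb A. \<tau> a \<in> hom B (Fo a) (Go a)) \<and>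
     (\<forall>f\<in>cAr A. cCmp B (Fm f) (\<tau> (cCod A f)) = cCmp B (\<tau> (cDom A f)) (Gm f))"

section \<open>Strict symmetric monoidal categories and symmetric lax monoidal functors\<close>

record ('o,'m) smc = "('o,'m) cat" +
  mTns  :: "'o \<Rightarrow> 'o \<Rightarrow> 'o"
  mTnsA :: "'m \<Rightarrow> 'm \<Rightarrow> 'm"
  mUnt  :: "'o"
  mSym  :: "'o \<Rightarrow> 'o \<Rightarrow> 'm"

definition strict_smc :: "('o,'m,'x) smc_scheme \<Rightarrow> bool" where
  "strict_smc L \<longleftrightarrow> category L \<and>
     mUnt L \<in> cOb L \<and>
     (\<forall>a\<in>cOb L. \<forall>b\<in>cOb L. mTns L a b \<in> cOb L) \<and>
     (\<forall>f\<in>cAr L. \<forall>g\<in>cAr L. mTnsA L f g \<in>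
         hom L (mTns L (cDom L f) (cDom L g)) (mTns L (cCod L f) (cCod L g))) \<and>
     (\<forall>a\<in>cOb L. \<forall>b\<in>cOb L. mTnsA L (cId L a) (cId L b) = cId L (mTns L a b)) \<and>
     (\<forall>f\<in>cAr L. \<forall>f'\<in>cAr L. \<forall>g\<in>cAr L. \<forall>g'\<in>cAr L.
         cCod L f = cDom L f' \<longrightarrow> cCod L g = cDom L g' \<longrightarrow>
         mTnsA L (cCmp L f f') (cCmp L g g') = cCmp L (mTnsA L f g) (mTnsA L f' g')) \<and>
     (\<forall>a\<in>cOb L. \<forall>b\<in>cOb L. \<forall>c\<in>cOb L. mTns L (mTns L a b) c = mTns L a (mTns L b c)) \<and>
     (\<forall>a\<in>cOb L. mTns L (mUnt L) a = a \<and> mTns L a (mUnt L) = a) \<and>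
     (\<forall>f\<in>cAr L. \<forall>g\<in>cAr L. \<forall>h\<in>cAr L. mTnsA L (mTnsA L f g) h = mTnsA L f (mTnsA L g h)) \<and>
     (\<forall>f\<in>cAr L. mTnsA L (cId L (mUnt L)) f = f \<and> mTnsA L f (cId L (mUnt L)) = f) \<and>
     (\<forall>a\<in>cOb L. \<forall>b\<in>cOb L. mSym L a b \<in> hom L (mTns L a b) (mTns L b a)) \<and>
     (\<forall>f\<in>cAr L. \<forall>g\<in>cAr L. cCmp L (mTnsA L f g) (mSym L (cCod L f) (cCod L g)) =
         cCmp L (mSym L (cDom L f) (cDom L g)) (mTnsA L g f)) \<and>
     (\<forall>a\<in>cOb L. \<forall>b\<in>cOb L. cCmp L (mSym L a b) (mSym L b a) = cId L (mTns L a b)) \<and>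
     (\<forall>a\<in>cOb L. \<forall>b\<in>cOb L. \<forall>c\<in>cOb L. mSym L a (mTns L b c) =
         cCmp L (mTnsA L (mSym L a b) (cId L c)) (mTnsA L (cId L b) (mSym L a c)))"

definition sym_lax_monoidal :: "('o,'m,'x) smc_scheme \<Rightarrow> ('p,'n,'y) smc_scheme \<Rightarrow>
    ('o \<Rightarrow> 'p) \<Rightarrow> ('m \<Rightarrow> 'n) \<Rightarrow> ('o \<Rightarrow> 'o \<Rightarrow> 'n) \<Rightarrow> 'n \<Rightarrow> bool" where
  "sym_lax_monoidal A B Go Gm \<phi> \<phi>0 \<longleftrightarrow>
     is_functor A B Go Gm \<and>
     (\<forall>a\<in>cOb A. \<forall>b\<in>cOb A. \<phi> a b \<in> hom B (mTns B (Go a) (Go b)) (Go (mTns A a b))) \<and>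
     \<phi>0 \<in> hom B (mUnt B) (Go (mUnt A)) \<and>
     (\<forall>f\<in>cAr A. \<forall>g\<in>cAr A.
        cCmp B (mTnsA B (Gm f) (Gm g)) (\<phi> (cCod A f) (cCod A g)) =
        cCmp B (\<phi> (cDom A f) (cDom A g)) (Gm (mTnsA A f g))) \<and>
     (\<forall>a\<in>cOb A. \<forall>b\<in>cOb A. \<forall>c\<in>cOb A.
        cCmp B (mTnsA B (\<phi> a b) (cId B (Go c))) (\<phi> (mTns A a b) c) =
        cCmp B (mTnsA B (cId B (Go a)) (\<phi> b c)) (\<phi> a (mTns A b c))) \<and>
     (\<forall>a\<in>cOb A. cCmp B (mTnsA B \<phi>0 (cId B (Go a))) (\<phi> (mUnt A) a) = cId B (Go a)) \<and>
     (\<forall>a\<in>cOb A. cCmp B (mTnsA B (cId B (Go a)) \<phi>0) (\<phi> a (mUnt A)) = cId B (Go a)) \<and>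
     (\<forall>a\<in>cOb A. \<forall>b\<in>cOb A.
        cCmp B (mSym B (Go a) (Go b)) (\<phi> b a) = cCmp B (\<phi> a b) (Gm (mSym A a b)))"

record ('o,'m) ccat = "('o,'m) cat" +
  pProd :: "'o \<Rightarrow> 'o \<Rightarrow> 'o"
  pTrm  :: "'o"
  pPr1  :: "'o \<Rightarrow> 'o \<Rightarrow> 'm"
  pPr2  :: "'o \<Rightarrow> 'o \<Rightarrow> 'm"
  pPair :: "'m \<Rightarrow> 'm \<Rightarrow> 'm"
  pBang :: "'o \<Rightarrow> 'm"

definition prod_arr :: "('o,'m) ccat \<Rightarrow> 'm \<Rightarrow> 'm \<Rightarrow> 'm" where
  "prod_arr C f g = pPair C (cCmp C (pPr1 C (cDom C f) (cDom C g)) f)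
                            (cCmp C (pPr2 C (cDom C f) (cDom C g)) g)"

definition diag :: "('o,'m) ccat \<Rightarrow> 'o \<Rightarrow> 'm" where
  "diag C X = pPair C (cId C X) (cId C X)"

definition cswap :: "('o,'m) ccat \<Rightarrow> 'o \<Rightarrow> 'o \<Rightarrow> 'm" where
  "cswap C X Y = pPair C (pPr2 C X Y) (pPr1 C X Y)"

definition cartesian_category :: "('o,'m) ccat \<Rightarrow> bool" where
  "cartesian_category C \<longleftrightarrow> category C \<and>
     pTrm C \<in> cOb C \<and>
     (\<forall>X\<in>cOb C. pBang C X \<in> hom C X (pTrm C)) \<and>
     (\<forall>X\<in>cOb C. \<forall>f\<in>hom C X (pTrm C). f = pBang C X) \<and>
     (\<forall>X\<in>cOb C. \<forall>Y\<in>cOb C. pProd C X Y \<in> cOb C \<and>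
         pPr1 C X Y \<in> hom C (pProd C X Y) X \<and> pPr2 C X Y \<in> hom C (pProd C X Y) Y) \<and>
     (\<forall>f\<in>cAr C. \<forall>g\<in>cAr C. cDom C f = cDom C g \<longrightarrow>
         pPair C f g \<in> hom C (cDom C f) (pProd C (cCod C f) (cCod C g)) \<and>
         cCmp C (pPair C f g) (pPr1 C (cCod C f) (cCod C g)) = f \<and>
         cCmp C (pPair C f g) (pPr2 C (cCod C f) (cCod C g)) = g) \<and>
     (\<forall>X\<in>cOb C. \<forall>Y\<in>cOb C. \<forall>h\<in>cAr C. cCod C h = pProd C X Y \<longrightarrow>
         h = pPair C (cCmp C h (pPr1 C X Y)) (cCmp C h (pPr2 C X Y))) \<and>
     \<comment> \<open>strictness of the cartesian monoidal structure\<close>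
     (\<forall>X\<in>cOb C. \<forall>Y\<in>cOb C. \<forall>Z\<in>cOb C.
         pProd C (pProd C X Y) Z = pProd C X (pProd C Y Z) \<and>
         pPair C (cCmp C (pPr1 C (pProd C X Y) Z) (pPr1 C X Y))
                 (pPair C (cCmp C (pPr1 C (pProd C X Y) Z) (pPr2 C X Y)) (pPr2 C (pProd C X Y) Z))
           = cId C (pProd C (pProd C X Y) Z)) \<and>
     (\<forall>X\<in>cOb C. pProd C (pTrm C) X = X \<and> pProd C X (pTrm C) = X \<and>
         pPr2 C (pTrm C) X = cId C X \<and> pPr1 C X (pTrm C) = cId C X)"

definition cart_smc :: "('o,'m) ccat \<Rightarrow> ('o,'m) smc" where
  "cart_smc C = \<lparr>cOb = cOb C, cAr = cAr C, cDom = cDom C, cCod = cCod C, cId = cId C, cCmp = cCmp C,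
     mTns = pProd C, mTnsA = prod_arr C, mUnt = pTrm C, mSym = cswap C\<rparr>"

section \<open>Linear-non-linear adjunctions\<close>

definition lnl_adjunction :: "('o,'m) ccat \<Rightarrow> ('p,'n) smc \<Rightarrow>
    ('o \<Rightarrow> 'p) \<Rightarrow> ('m \<Rightarrow> 'n) \<Rightarrow> ('p \<Rightarrow> 'o) \<Rightarrow> ('n \<Rightarrow> 'm) \<Rightarrow>
    ('o \<Rightarrow> 'o \<Rightarrow> 'n) \<Rightarrow> 'n \<Rightarrow> ('p \<Rightarrow> 'p \<Rightarrow> 'm) \<Rightarrow> 'm \<Rightarrow> ('o \<Rightarrow> 'm) \<Rightarrow> ('p \<Rightarrow> 'n) \<Rightarrow> bool" where
  "lnl_adjunction C L Fo Fm Uo Um m m1 n n1 \<eta> \<epsilon> \<longleftrightarrow>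
     cartesian_category C \<and> strict_smc L \<and>
     \<comment> \<open>F -| U with unit eta and counit epsilon\<close>
     is_functor C L Fo Fm \<and> is_functor L C Uo Um \<and>
     nat_trans C C (\<lambda>X. X) (\<lambda>f. f) (\<lambda>X. Uo (Fo X)) (\<lambda>f. Um (Fm f)) \<eta> \<and>
     nat_trans L L (\<lambda>A. Fo (Uo A)) (\<lambda>f. Fm (Um f)) (\<lambda>A. A) (\<lambda>f. f) \<epsilon> \<and>
     (\<forall>X\<in>cOb C. cCmp L (Fm (\<eta> X)) (\<epsilon> (Fo X)) = cId L (Fo X)) \<and>
     (\<forall>A\<in>cOb L. cCmp C (\<eta> (Uo A)) (Um (\<epsilon> A)) = cId C (Uo A)) \<and>
     \<comment> \<open>F strong symmetric monoidal via m, m1\<close>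
     sym_lax_monoidal (cart_smc C) L Fo Fm m m1 \<and>
     (\<forall>X\<in>cOb C. \<forall>Y\<in>cOb C. is_iso L (m X Y)) \<and> is_iso L m1 \<and>
     \<comment> \<open>U lax symmetric monoidal via n, n1\<close>
     sym_lax_monoidal L (cart_smc C) Uo Um n n1 \<and>
     \<comment> \<open>the adjunction is monoidal: unit and counit are monoidal natural transformations\<close>
     (\<forall>X\<in>cOb C. \<forall>Y\<in>cOb C.
        cCmp C (prod_arr C (\<eta> X) (\<eta> Y)) (cCmp C (n (Fo X) (Fo Y)) (Um (m X Y))) = \<eta> (pProd C X Y)) \<and>
     cCmp C n1 (Um m1) = \<eta> (pTrm C) \<and>
     (\<forall>A\<in>cOb L. \<forall>B\<in>cOb L.
        cCmp L (m (Uo A) (Uo B)) (cCmp L (Fm (n A B)) (\<epsilon> (mTns L A B))) = mTnsA L (\<epsilon> A) (\<epsilon> B)) \<and>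
     cCmp L m1 (cCmp L (Fm n1) (\<epsilon> (mUnt L))) = cId L (mUnt L)"

definition copy :: "('o,'m) ccat \<Rightarrow> ('p,'n) smc \<Rightarrow> ('m \<Rightarrow> 'n) \<Rightarrow> ('o \<Rightarrow> 'o \<Rightarrow> 'n) \<Rightarrow> 'o \<Rightarrow> 'n" where
  "copy C L Fm m X = cCmp L (Fm (diag C X)) (inv_arr L (m X X))"

definition weak :: "('o,'m) ccat \<Rightarrow> ('p,'n) smc \<Rightarrow> ('m \<Rightarrow> 'n) \<Rightarrow> 'n \<Rightarrow> 'o \<Rightarrow> 'n" where
  "weak C L Fm m1 X = cCmp L (Fm (pBang C X)) (inv_arr L m1)"

section \<open>Simple and linear simple categories\<close>

text \<open>A morphism (f,u) : a -> b is represented as the triple (a, b, (f, u)).\<close>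

definition src :: "'a \<times> 'a \<times> 'c \<Rightarrow> 'a" where "src t = fst t"
definition tgt :: "'a \<times> 'a \<times> 'c \<Rightarrow> 'a" where "tgt t = fst (snd t)"
definition base :: "'a \<times> 'a \<times> ('m \<times> 'n) \<Rightarrow> 'm" where "base t = fst (snd (snd t))"
definition fibc :: "'a \<times> 'a \<times> ('m \<times> 'n) \<Rightarrow> 'n" where "fibc t = snd (snd (snd t))"

definition Scat :: "('o,'m) ccat \<Rightarrow> ('o \<times> 'o, ('o \<times> 'o) \<times> ('o \<times> 'o) \<times> ('m \<times> 'm)) cat" where
  "Scat C = \<lparr>
     cOb = cOb C \<times> cOb C,
     cAr = {((X,J),(Y,K),(f,u)) | X J Y K f u. X \<in> cOb C \<and> J \<in> cOb C \<and> Y \<in> cOb C \<and> K \<in> cOb C \<and>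
              f \<in> hom C X Y \<and> u \<in> hom C (pProd C X J) K},
     cDom = src, cCod = tgt,
     cId = (\<lambda>a. (a, a, (cId C (fst a), pPr2 C (fst a) (snd a)))),
     cCmp = (\<lambda>\<phi> \<psi>. (src \<phi>, tgt \<psi>, (cCmp C (base \<phi>) (base \<psi>),
        cCmp C (cCmp C (prod_arr C (diag C (fst (src \<phi>))) (cId C (snd (src \<phi>))))
                       (prod_arr C (base \<phi>) (fibc \<phi>))) (fibc \<psi>))))\<rparr>"

text \<open>Chosen cartesian morphism of s over f : X -> Y at K: (f, pi2) : (X,K) -> (Y,K).\<close>
definition scart :: "('o,'m) ccat \<Rightarrow> 'm \<Rightarrow> 'o \<Rightarrow> ('o \<times> 'o) \<times> ('o \<times> 'o) \<times> ('m \<times> 'm)" where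
  "scart C f K = ((cDom C f, K), (cCod C f, K), (f, pPr2 C (cDom C f) K))"

definition LScat :: "('o,'m) ccat \<Rightarrow> ('p,'n) smc \<Rightarrow> ('o \<Rightarrow> 'p) \<Rightarrow> ('m \<Rightarrow> 'n) \<Rightarrow>
    ('o \<Rightarrow> 'o \<Rightarrow> 'n) \<Rightarrow> 'n \<Rightarrow> ('o \<times> 'p, ('o \<times> 'p) \<times> ('o \<times> 'p) \<times> ('m \<times> 'n)) cat" where
  "LScat C L Fo Fm m m1 = \<lparr>
     cOb = cOb C \<times> cOb L,
     cAr = {((X,A),(Y,B),(f,u)) | X A Y B f u. X \<in> cOb C \<and> A \<in> cOb L \<and> Y \<in> cOb C \<and> B \<in> cOb L \<and>
              f \<in> hom C X Y \<and> u \<in> hom L (mTns L (Fo X) A) B},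
     cDom = src, cCod = tgt,
     cId = (\<lambda>a. (a, a, (cId C (fst a), mTnsA L (weak C L Fm m1 (fst a)) (cId L (snd a))))),
     cCmp = (\<lambda>\<phi> \<psi>. (src \<phi>, tgt \<psi>, (cCmp C (base \<phi>) (base \<psi>),
        cCmp L (cCmp L (mTnsA L (copy C L Fm m (fst (src \<phi>))) (cId L (snd (src \<phi>))))
                       (mTnsA L (Fm (base \<phi>)) (fibc \<phi>))) (fibc \<psi>))))\<rparr>"

text \<open>Chosen cartesian morphism of ls over f : X -> Y at B: (f, w_X (x) id_B) : (X,B) -> (Y,B).\<close>
definition lscart :: "('o,'m) ccat \<Rightarrow> ('p,'n) smc \<Rightarrow> ('m \<Rightarrow> 'n) \<Rightarrow> 'n \<Rightarrow> 'm \<Rightarrow> 'p \<Rightarrow>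
    ('o \<times> 'p) \<times> ('o \<times> 'p) \<times> ('m \<times> 'n)" where
  "lscart C L Fm m1 f B = ((cDom C f, B), (cCod C f, B), (f, mTnsA L (weak C L Fm m1 (cDom C f)) (cId L B)))"

definition Sfib :: "('o,'m) ccat \<Rightarrow> 'o \<Rightarrow> ('o \<times> 'o, ('o \<times> 'o) \<times> ('o \<times> 'o) \<times> ('m \<times> 'm)) smc" where
  "Sfib C X = \<lparr>
     cOb = {X} \<times> cOb C,
     cAr = {\<phi> \<in> cAr (Scat C). fst (src \<phi>) = X \<and> fst (tgt \<phi>) = X \<and> base \<phi> = cId C X},
     cDom = cDom (Scat C), cCod = cCod (Scat C), cId = cId (Scat C), cCmp = cCmp (Scat C),
     mTns = (\<lambda>a b. (X, pProd C (snd a) (snd b))),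
     mTnsA = (\<lambda>\<phi> \<psi>. ((X, pProd C (snd (src \<phi>)) (snd (src \<psi>))), (X, pProd C (snd (tgt \<phi>)) (snd (tgt \<psi>))),
        (cId C X, pPair C
           (cCmp C (prod_arr C (cId C X) (pPr1 C (snd (src \<phi>)) (snd (src \<psi>)))) (fibc \<phi>))
           (cCmp C (prod_arr C (cId C X) (pPr2 C (snd (src \<phi>)) (snd (src \<psi>)))) (fibc \<psi>))))),
     mUnt = (X, pTrm C),
     mSym = (\<lambda>a b. ((X, pProd C (snd a) (snd b)), (X, pProd C (snd b) (snd a)),
        (cId C X, cCmp C (pPr2 C X (pProd C (snd a) (snd b))) (cswap C (snd a) (snd b)))))\<rparr>"

definition LSfib :: "('o,'m) ccat \<Rightarrow> ('p,'n) smc \<Rightarrow> ('o \<Rightarrow> 'p) \<Rightarrow> ('m \<Rightarrow> 'n) \<Rightarrow>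
    ('o \<Rightarrow> 'o \<Rightarrow> 'n) \<Rightarrow> 'n \<Rightarrow> 'o \<Rightarrow> ('o \<times> 'p, ('o \<times> 'p) \<times> ('o \<times> 'p) \<times> ('m \<times> 'n)) smc" where
  "LSfib C L Fo Fm m m1 X = (let LS = LScat C L Fo Fm m m1 in \<lparr>
     cOb = {X} \<times> cOb L,
     cAr = {\<phi> \<in> cAr LS. fst (src \<phi>) = X \<and> fst (tgt \<phi>) = X \<and> base \<phi> = cId C X},
     cDom = cDom LS, cCod = cCod LS, cId = cId LS, cCmp = cCmp LS,
     mTns = (\<lambda>a b. (X, mTns L (snd a) (snd b))),
     mTnsA = (\<lambda>\<phi> \<psi>. ((X, mTns L (snd (src \<phi>)) (snd (src \<psi>))), (X, mTns L (snd (tgt \<phi>)) (snd (tgt \<psi>))),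
        (cId C X,
         cCmp L (cCmp L (mTnsA L (copy C L Fm m X) (cId L (mTns L (snd (src \<phi>)) (snd (src \<psi>)))))
                        (mTnsA L (mTnsA L (cId L (Fo X)) (mSym L (Fo X) (snd (src \<phi>)))) (cId L (snd (src \<psi>)))))
                (mTnsA L (fibc \<phi>) (fibc \<psi>))))),
     mUnt = (X, mUnt L),
     mSym = (\<lambda>a b. ((X, mTns L (snd a) (snd b)), (X, mTns L (snd b) (snd a)),
        (cId C X, mTnsA L (weak C L Fm m1 X) (mSym L (snd a) (snd b)))))\<rparr>)"

section \<open>The functor U^S and its monoidal structure maps\<close>

definition USo :: "('p \<Rightarrow> 'o) \<Rightarrow> 'o \<times> 'p \<Rightarrow> 'o \<times> 'o" where
  "USo Uo a = (fst a, Uo (snd a))"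

definition USm :: "('o,'m) ccat \<Rightarrow> ('o \<Rightarrow> 'p) \<Rightarrow> ('p \<Rightarrow> 'o) \<Rightarrow> ('n \<Rightarrow> 'm) \<Rightarrow>
    ('p \<Rightarrow> 'p \<Rightarrow> 'm) \<Rightarrow> ('o \<Rightarrow> 'm) \<Rightarrow>
    ('o \<times> 'p) \<times> ('o \<times> 'p) \<times> ('m \<times> 'n) \<Rightarrow> ('o \<times> 'o) \<times> ('o \<times> 'o) \<times> ('m \<times> 'm)" where
  "USm C Fo Uo Um n \<eta> \<phi> = (USo Uo (src \<phi>), USo Uo (tgt \<phi>), (base \<phi>,
     cCmp C (cCmp C (prod_arr C (\<eta> (fst (src \<phi>))) (cId C (Uo (snd (src \<phi>)))))
                    (n (Fo (fst (src \<phi>))) (snd (src \<phi>))))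
            (Um (fibc \<phi>))))"

definition US_unit :: "('o,'m) ccat \<Rightarrow> ('p,'n) smc \<Rightarrow> ('p \<Rightarrow> 'o) \<Rightarrow> 'm \<Rightarrow> 'o \<Rightarrow>
    ('o \<times> 'o) \<times> ('o \<times> 'o) \<times> ('m \<times> 'm)" where
  "US_unit C L Uo n1 X = ((X, pTrm C), (X, Uo (mUnt L)), (cId C X, cCmp C (pPr2 C X (pTrm C)) n1))"

definition US_mult :: "('o,'m) ccat \<Rightarrow> ('p,'n) smc \<Rightarrow> ('p \<Rightarrow> 'o) \<Rightarrow> ('p \<Rightarrow> 'p \<Rightarrow> 'm) \<Rightarrow> 'o \<Rightarrow>
    'o \<times> 'p \<Rightarrow> 'o \<times> 'p \<Rightarrow> ('o \<times> 'o) \<times> ('o \<times> 'o) \<times> ('m \<times> 'm)" where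
  "US_mult C L Uo n X a b =
     ((X, pProd C (Uo (snd a)) (Uo (snd b))), (X, Uo (mTns L (snd a) (snd b))),
      (cId C X, cCmp C (pPr2 C X (pProd C (Uo (snd a)) (Uo (snd b)))) (n (snd a) (snd b))))"

end

theory Submission
  imports Defs
begin

text \<open>Every fibre component of \<open>U\<^sup>S\<close> is a morphism \<open>X \<times> U A \<rightarrow> U B\<close> of the form
  \<open>\<langle>e\<^sub>1, e\<^sub>2\<rangle>;n;U(u)\<close> for generalised elements \<open>e\<^sub>i\<close>. The coherence laws of the lax
  structure \<open>(U, n, n\<^sub>I)\<close> become rewrite rules for such pairings, and since the unit \<open>\<eta>\<close> is a
  monoidal transformation, \<open>\<eta>;U(\<^bold>c\<^sub>X)\<close> and \<open>\<eta>;U(\<^bold>w\<^sub>X)\<close> are \<open>\<langle>\<eta>, \<eta>\<rangle>;n\<close> and \<open>!;n\<^sub>I\<close>: copying and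
  weakening in the linear category turn into the diagonal and the terminal map of the cartesian
  one. Functoriality, preservation of the chosen cartesian morphisms and each lax monoidal axiom
  on the fibres then follow by rewriting both sides to the same pairing.\<close>

section \<open>Cartesian categories\<close>

locale cartesian_cat =
  fixes C :: "('o,'m) ccat"
  assumes cartesian: "cartesian_category C"
begin

abbreviation cmp (infixr "\<cdot>" 75) where "f \<cdot> g \<equiv> cCmp C f g"
abbreviation "Ar f \<equiv> f \<in> cAr C"
abbreviation "Ob X \<equiv> X \<in> cOb C"
abbreviation "dm f \<equiv> cDom C f"
abbreviation "cd f \<equiv> cCod C f"
abbreviation "idC \<equiv> cId C"
abbreviation "pr1 \<equiv> pPr1 C"
abbreviation "pr2 \<equiv> pPr2 C"
abbreviation "pair \<equiv> pPair C"
abbreviation "prd \<equiv> pProd C"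
abbreviation "trm \<equiv> pTrm C"
abbreviation "bang \<equiv> pBang C"

lemma category: "category C"
  using cartesian unfolding cartesian_category_def by auto

lemma C_dom [simp]: "Ar f \<Longrightarrow> Ob (dm f)"
  and C_cod [simp]: "Ar f \<Longrightarrow> Ob (cd f)"
  using category unfolding category_def by auto

lemma C_id [simp]: "Ob X \<Longrightarrow> Ar (idC X)" "Ob X \<Longrightarrow> dm (idC X) = X" "Ob X \<Longrightarrow> cd (idC X) = X"
  using category unfolding category_def hom_def by auto

lemma C_comp [simp]:
  "Ar f \<Longrightarrow> Ar g \<Longrightarrow> cd f = dm g \<Longrightarrow> Ar (f \<cdot> g)"
  "Ar f \<Longrightarrow> Ar g \<Longrightarrow> cd f = dm g \<Longrightarrow> dm (f \<cdot> g) = dm f"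
  "Ar f \<Longrightarrow> Ar g \<Longrightarrow> cd f = dm g \<Longrightarrow> cd (f \<cdot> g) = cd g"
  using category unfolding category_def hom_def by auto

lemma C_id_left [simp]: "Ar f \<Longrightarrow> X = dm f \<Longrightarrow> idC X \<cdot> f = f"
  and C_id_right [simp]: "Ar f \<Longrightarrow> X = cd f \<Longrightarrow> f \<cdot> idC X = f"
  using category unfolding category_def by auto

lemma C_assoc [simp]:
  "Ar f \<Longrightarrow> Ar g \<Longrightarrow> Ar h \<Longrightarrow> cd f = dm g \<Longrightarrow> cd g = dm h \<Longrightarrow> (f \<cdot> g) \<cdot> h = f \<cdot> (g \<cdot> h)"
  using category unfolding category_def by auto

lemma C_comp_eq_right:
  "a \<cdot> b = c \<cdot> d \<Longrightarrow> Ar a \<Longrightarrow> Ar b \<Longrightarrow> Ar c \<Longrightarrow> Ar d \<Longrightarrow> Ar k \<Longrightarrow>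
   cd a = dm b \<Longrightarrow> cd c = dm d \<Longrightarrow> cd b = dm k \<Longrightarrow> cd d = dm k \<Longrightarrow> a \<cdot> b \<cdot> k = c \<cdot> d \<cdot> k"
  by (metis C_assoc)

lemma C_trm [simp]: "Ob trm"
  using cartesian unfolding cartesian_category_def by auto

lemma C_bang [simp]: "Ob X \<Longrightarrow> Ar (bang X)" "Ob X \<Longrightarrow> dm (bang X) = X" "Ob X \<Longrightarrow> cd (bang X) = trm"
  using cartesian unfolding cartesian_category_def hom_def by auto

lemma C_bang_unique: "Ar f \<Longrightarrow> cd f = trm \<Longrightarrow> f = bang (dm f)"
  using cartesian unfolding cartesian_category_def hom_def by auto

lemma C_comp_bang [simp]:
  assumes "Ar f" "cd f = X"
  shows "f \<cdot> bang X = bang (dm f)"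
proof -
  have "Ob X" using assms C_cod by blast
  then show ?thesis using assms C_bang_unique[of "f \<cdot> bang X"] by simp
qed

lemma C_comp_bang_comp [simp]:
  "Ar f \<Longrightarrow> cd f = X \<Longrightarrow> Ar k \<Longrightarrow> dm k = trm \<Longrightarrow> f \<cdot> (bang X \<cdot> k) = bang (dm f) \<cdot> k"
  by (metis C_assoc C_bang C_comp_bang C_cod)

lemma C_prd [simp]: "Ob X \<Longrightarrow> Ob Y \<Longrightarrow> Ob (prd X Y)"
  using cartesian unfolding cartesian_category_def by auto

lemma C_pr1 [simp]:
  "Ob X \<Longrightarrow> Ob Y \<Longrightarrow> Ar (pr1 X Y)"
  "Ob X \<Longrightarrow> Ob Y \<Longrightarrow> dm (pr1 X Y) = prd X Y"
  "Ob X \<Longrightarrow> Ob Y \<Longrightarrow> cd (pr1 X Y) = X"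
  using cartesian unfolding cartesian_category_def hom_def by auto

lemma C_pr2 [simp]:
  "Ob X \<Longrightarrow> Ob Y \<Longrightarrow> Ar (pr2 X Y)"
  "Ob X \<Longrightarrow> Ob Y \<Longrightarrow> dm (pr2 X Y) = prd X Y"
  "Ob X \<Longrightarrow> Ob Y \<Longrightarrow> cd (pr2 X Y) = Y"
  using cartesian unfolding cartesian_category_def hom_def by auto

lemma C_pair [simp]:
  "Ar f \<Longrightarrow> Ar g \<Longrightarrow> dm f = dm g \<Longrightarrow> Ar (pair f g)"
  "Ar f \<Longrightarrow> Ar g \<Longrightarrow> dm f = dm g \<Longrightarrow> dm (pair f g) = dm f"
  "Ar f \<Longrightarrow> Ar g \<Longrightarrow> dm f = dm g \<Longrightarrow> cd (pair f g) = prd (cd f) (cd g)"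
  using cartesian unfolding cartesian_category_def hom_def by auto

lemma C_pair_pr1 [simp]:
    "Ar f \<Longrightarrow> Ar g \<Longrightarrow> dm f = dm g \<Longrightarrow> X = cd f \<Longrightarrow> Y = cd g \<Longrightarrow> pair f g \<cdot> pr1 X Y = f"
  and C_pair_pr2 [simp]:
    "Ar f \<Longrightarrow> Ar g \<Longrightarrow> dm f = dm g \<Longrightarrow> X = cd f \<Longrightarrow> Y = cd g \<Longrightarrow> pair f g \<cdot> pr2 X Y = g"
  using cartesian unfolding cartesian_category_def hom_def by auto

lemma C_pair_pr1_comp [simp]:
    "Ar f \<Longrightarrow> Ar g \<Longrightarrow> dm f = dm g \<Longrightarrow> X = cd f \<Longrightarrow> Y = cd g \<Longrightarrow> Ar k \<Longrightarrow> dm k = X \<Longrightarrow>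
     pair f g \<cdot> (pr1 X Y \<cdot> k) = f \<cdot> k"
  and C_pair_pr2_comp [simp]:
    "Ar f \<Longrightarrow> Ar g \<Longrightarrow> dm f = dm g \<Longrightarrow> X = cd f \<Longrightarrow> Y = cd g \<Longrightarrow> Ar k \<Longrightarrow> dm k = Y \<Longrightarrow>
     pair f g \<cdot> (pr2 X Y \<cdot> k) = g \<cdot> k"
  by (simp_all flip: C_assoc)

lemma C_pair_eta:
  assumes "Ob X" "Ob Y" "Ar h" "cd h = prd X Y"
  shows "pair (h \<cdot> pr1 X Y) (h \<cdot> pr2 X Y) = h"
proof -
  have "h = pair (h \<cdot> pr1 X Y) (h \<cdot> pr2 X Y)"
    using cartesian assms unfolding cartesian_category_def by auto
  then show ?thesis by (rule sym)
qed

lemma C_pair_eta_comp: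
  "Ar w \<Longrightarrow> Ar q \<Longrightarrow> cd w = dm q \<Longrightarrow> Ob Y \<Longrightarrow> Ob Z \<Longrightarrow> cd q = prd Y Z \<Longrightarrow>
   pair (w \<cdot> q \<cdot> pr1 Y Z) (w \<cdot> q \<cdot> pr2 Y Z) = w \<cdot> q"
  using C_pair_eta[of Y Z "w \<cdot> q"] by simp

lemma C_pair_ext:
  "Ar h \<Longrightarrow> Ar h' \<Longrightarrow> Ob X \<Longrightarrow> Ob Y \<Longrightarrow> cd h = prd X Y \<Longrightarrow> cd h' = prd X Y \<Longrightarrow>
   h \<cdot> pr1 X Y = h' \<cdot> pr1 X Y \<Longrightarrow> h \<cdot> pr2 X Y = h' \<cdot> pr2 X Y \<Longrightarrow> h = h'"
  by (metis C_pair_eta)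

lemma C_comp_pair [simp]:
  "Ar h \<Longrightarrow> Ar f \<Longrightarrow> Ar g \<Longrightarrow> dm f = dm g \<Longrightarrow> cd h = dm f \<Longrightarrow> h \<cdot> pair f g = pair (h \<cdot> f) (h \<cdot> g)"
  by (rule C_pair_ext[where X="cd f" and Y="cd g"]) simp_all

lemma C_comp_pair_comp [simp]:
  "Ar h \<Longrightarrow> Ar f \<Longrightarrow> Ar g \<Longrightarrow> dm f = dm g \<Longrightarrow> cd h = dm f \<Longrightarrow> Ar k \<Longrightarrow> dm k = prd (cd f) (cd g) \<Longrightarrow>
   h \<cdot> (pair f g \<cdot> k) = pair (h \<cdot> f) (h \<cdot> g) \<cdot> k"
  by (simp flip: C_assoc)

lemma C_prd_assoc [simp]: "Ob X \<Longrightarrow> Ob Y \<Longrightarrow> Ob Z \<Longrightarrow> prd (prd X Y) Z = prd X (prd Y Z)"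
  using cartesian unfolding cartesian_category_def by auto

lemma C_prd_assoc_pair:
  "Ob X \<Longrightarrow> Ob Y \<Longrightarrow> Ob Z \<Longrightarrow>
   pair (pr1 (prd X Y) Z \<cdot> pr1 X Y) (pair (pr1 (prd X Y) Z \<cdot> pr2 X Y) (pr2 (prd X Y) Z))
     = idC (prd (prd X Y) Z)"
  using cartesian unfolding cartesian_category_def by auto

lemma C_prd_unit [simp]:
  "Ob X \<Longrightarrow> prd trm X = X" "Ob X \<Longrightarrow> prd X trm = X"
  "Ob X \<Longrightarrow> pr2 trm X = idC X" "Ob X \<Longrightarrow> pr1 X trm = idC X"
  using cartesian unfolding cartesian_category_def by auto

lemma C_pr1_trm [simp]: "Ob X \<Longrightarrow> pr1 trm X = bang X"
  and C_pr2_trm [simp]: "Ob X \<Longrightarrow> pr2 X trm = bang X"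
  using C_bang_unique[of "pr1 trm X"] C_bang_unique[of "pr2 X trm"] by simp_all

lemma C_pr1_prd_assoc: "Ob X \<Longrightarrow> Ob Y \<Longrightarrow> Ob Z \<Longrightarrow> pr1 X (prd Y Z) = pr1 (prd X Y) Z \<cdot> pr1 X Y"
proof -
  assume "Ob X" "Ob Y" "Ob Z"
  then have "pr1 X (prd Y Z) = idC (prd (prd X Y) Z) \<cdot> pr1 X (prd Y Z)" by simp
  also have "\<dots> = pr1 (prd X Y) Z \<cdot> pr1 X Y"
    by (subst C_prd_assoc_pair[symmetric]) (use \<open>Ob X\<close> \<open>Ob Y\<close> \<open>Ob Z\<close> in simp_all)
  finally show ?thesis .
qed

lemma C_pr2_prd_assoc:
  "Ob X \<Longrightarrow> Ob Y \<Longrightarrow> Ob Z \<Longrightarrow> pr2 X (prd Y Z) = pair (pr1 (prd X Y) Z \<cdot> pr2 X Y) (pr2 (prd X Y) Z)"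
proof -
  assume "Ob X" "Ob Y" "Ob Z"
  then have "pr2 X (prd Y Z) = idC (prd (prd X Y) Z) \<cdot> pr2 X (prd Y Z)" by simp
  also have "\<dots> = pair (pr1 (prd X Y) Z \<cdot> pr2 X Y) (pr2 (prd X Y) Z)"
    by (subst C_prd_assoc_pair[symmetric]) (use \<open>Ob X\<close> \<open>Ob Y\<close> \<open>Ob Z\<close> in simp_all)
  finally show ?thesis .
qed

lemma C_pr1_prd_left [simp]:
  assumes "Ob X" "Ob Y" "Ob Z"
  shows "pr1 (prd X Y) Z = pair (pr1 X (prd Y Z)) (pr2 X (prd Y Z) \<cdot> pr1 Y Z)"
proof -
  have "pair (pr1 X (prd Y Z)) (pr2 X (prd Y Z) \<cdot> pr1 Y Z)
      = pair (pr1 (prd X Y) Z \<cdot> pr1 X Y) (pr1 (prd X Y) Z \<cdot> pr2 X Y)"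
    unfolding C_pr1_prd_assoc[OF assms] C_pr2_prd_assoc[OF assms] using assms
    by (simp del: C_prd_assoc)
  also have "\<dots> = pr1 (prd X Y) Z"
    using assms by (intro C_pair_eta) (simp_all del: C_prd_assoc)
  finally show ?thesis by simp
qed

lemma C_pr2_prd_left [simp]:
  assumes "Ob X" "Ob Y" "Ob Z"
  shows "pr2 (prd X Y) Z = pr2 X (prd Y Z) \<cdot> pr2 Y Z"
  unfolding C_pr2_prd_assoc[OF assms] using assms by simp

lemma C_pair_assoc [simp]:
  "Ar a \<Longrightarrow> Ar b \<Longrightarrow> Ar c \<Longrightarrow> dm a = dm b \<Longrightarrow> dm b = dm c \<Longrightarrow> pair (pair a b) c = pair a (pair b c)"
  apply (rule C_pair_ext[where X="cd a" and Y="prd (cd b) (cd c)"])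
  apply (simp_all del: C_pr1_prd_left C_pr2_prd_left)
  apply (subst C_pr1_prd_assoc, simp_all del: C_pr1_prd_left C_pr2_prd_left)
  apply (subst C_pr2_prd_assoc, simp_all del: C_pr1_prd_left C_pr2_prd_left)
  done

declare prod_arr_def [simp] diag_def [simp] cswap_def [simp]

end

section \<open>Strict symmetric monoidal categories\<close>

locale strict_symmetric_monoidal =
  fixes L :: "('p,'n) smc"
  assumes strict_symmetric_monoidal: "strict_smc L"
begin

abbreviation lcmp (infixr "\<bullet>" 75) where "f \<bullet> g \<equiv> cCmp L f g"
abbreviation tns (infixr "\<otimes>" 80) where "a \<otimes> b \<equiv> mTns L a b"
abbreviation tnsA (infixr "\<oplus>" 80) where "f \<oplus> g \<equiv> mTnsA L f g"
abbreviation "ArL f \<equiv> f \<in> cAr L"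
abbreviation "ObL X \<equiv> X \<in> cOb L"
abbreviation "dL f \<equiv> cDom L f"
abbreviation "cL f \<equiv> cCod L f"
abbreviation "idL \<equiv> cId L"

lemma category_L: "category L"
  using strict_symmetric_monoidal unfolding strict_smc_def by auto

lemma L_dom [simp]: "ArL f \<Longrightarrow> ObL (dL f)"
  and L_cod [simp]: "ArL f \<Longrightarrow> ObL (cL f)"
  using category_L unfolding category_def by auto

lemma L_id [simp]: "ObL X \<Longrightarrow> ArL (idL X)" "ObL X \<Longrightarrow> dL (idL X) = X" "ObL X \<Longrightarrow> cL (idL X) = X"
  using category_L unfolding category_def hom_def by auto

lemma L_comp [simp]:
  "ArL f \<Longrightarrow> ArL g \<Longrightarrow> cL f = dL g \<Longrightarrow> ArL (f \<bullet> g)"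
  "ArL f \<Longrightarrow> ArL g \<Longrightarrow> cL f = dL g \<Longrightarrow> dL (f \<bullet> g) = dL f"
  "ArL f \<Longrightarrow> ArL g \<Longrightarrow> cL f = dL g \<Longrightarrow> cL (f \<bullet> g) = cL g"
  using category_L unfolding category_def hom_def by auto

lemma L_id_left [simp]: "ArL f \<Longrightarrow> X = dL f \<Longrightarrow> idL X \<bullet> f = f"
  and L_id_right [simp]: "ArL f \<Longrightarrow> X = cL f \<Longrightarrow> f \<bullet> idL X = f"
  using category_L unfolding category_def by auto

lemma L_assoc [simp]:
  "ArL f \<Longrightarrow> ArL g \<Longrightarrow> ArL h \<Longrightarrow> cL f = dL g \<Longrightarrow> cL g = dL h \<Longrightarrow> (f \<bullet> g) \<bullet> h = f \<bullet> (g \<bullet> h)"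
  using category_L unfolding category_def by auto

lemma L_unit [simp]: "ObL (mUnt L)"
  using strict_symmetric_monoidal unfolding strict_smc_def by auto

lemma L_tns [simp]: "ObL a \<Longrightarrow> ObL b \<Longrightarrow> ObL (a \<otimes> b)"
  using strict_symmetric_monoidal unfolding strict_smc_def by auto

lemma L_tnsA [simp]:
  "ArL f \<Longrightarrow> ArL g \<Longrightarrow> ArL (f \<oplus> g)"
  "ArL f \<Longrightarrow> ArL g \<Longrightarrow> dL (f \<oplus> g) = dL f \<otimes> dL g"
  "ArL f \<Longrightarrow> ArL g \<Longrightarrow> cL (f \<oplus> g) = cL f \<otimes> cL g"
  using strict_symmetric_monoidal unfolding strict_smc_def hom_def by auto

lemma L_tns_assoc [simp]: "ObL a \<Longrightarrow> ObL b \<Longrightarrow> ObL c \<Longrightarrow> (a \<otimes> b) \<otimes> c = a \<otimes> (b \<otimes> c)"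
  using strict_symmetric_monoidal unfolding strict_smc_def by auto

lemma L_tns_unit [simp]: "ObL a \<Longrightarrow> mUnt L \<otimes> a = a" "ObL a \<Longrightarrow> a \<otimes> mUnt L = a"
  using strict_symmetric_monoidal unfolding strict_smc_def by auto

lemma L_tnsA_assoc [simp]: "ArL f \<Longrightarrow> ArL g \<Longrightarrow> ArL h \<Longrightarrow> (f \<oplus> g) \<oplus> h = f \<oplus> (g \<oplus> h)"
  using strict_symmetric_monoidal unfolding strict_smc_def by auto

lemma L_sym [simp]:
  "ObL a \<Longrightarrow> ObL b \<Longrightarrow> ArL (mSym L a b)"
  "ObL a \<Longrightarrow> ObL b \<Longrightarrow> dL (mSym L a b) = a \<otimes> b"
  "ObL a \<Longrightarrow> ObL b \<Longrightarrow> cL (mSym L a b) = b \<otimes> a"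
  using strict_symmetric_monoidal unfolding strict_smc_def hom_def by auto

end

section \<open>Symmetric lax monoidal functors into a cartesian category\<close>

locale sym_lax_to_cartesian = cartesian_cat C + strict_symmetric_monoidal L
  for C :: "('o,'m) ccat" and L :: "('p,'n) smc" +
  fixes Uo :: "'p \<Rightarrow> 'o" and Um :: "'n \<Rightarrow> 'm" and n :: "'p \<Rightarrow> 'p \<Rightarrow> 'm" and n1 :: "'m"
  assumes U_lax: "sym_lax_monoidal L (cart_smc C) Uo Um n n1"
begin

lemma U_ob [simp]: "ObL a \<Longrightarrow> Ob (Uo a)"
  and U_ar [simp]: "ArL f \<Longrightarrow> Ar (Um f)" "ArL f \<Longrightarrow> dm (Um f) = Uo (dL f)" "ArL f \<Longrightarrow> cd (Um f) = Uo (cL f)"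
  and U_id [simp]: "ObL a \<Longrightarrow> Um (idL a) = idC (Uo a)"
  and U_comp [simp]: "ArL f \<Longrightarrow> ArL g \<Longrightarrow> cL f = dL g \<Longrightarrow> Um (f \<bullet> g) = Um f \<cdot> Um g"
  using U_lax unfolding sym_lax_monoidal_def is_functor_def hom_def cart_smc_def by auto

lemma n_ar [simp]:
  "ObL a \<Longrightarrow> ObL b \<Longrightarrow> Ar (n a b)"
  "ObL a \<Longrightarrow> ObL b \<Longrightarrow> dm (n a b) = prd (Uo a) (Uo b)"
  "ObL a \<Longrightarrow> ObL b \<Longrightarrow> cd (n a b) = Uo (a \<otimes> b)"
  using U_lax unfolding sym_lax_monoidal_def hom_def cart_smc_def by auto

lemma n1_ar [simp]: "Ar n1" "dm n1 = trm" "cd n1 = Uo (mUnt L)"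
  using U_lax unfolding sym_lax_monoidal_def hom_def cart_smc_def by auto

lemma n_natural:
  "ArL f \<Longrightarrow> ArL g \<Longrightarrow> prod_arr C (Um f) (Um g) \<cdot> n (cL f) (cL g) = n (dL f) (dL g) \<cdot> Um (f \<oplus> g)"
  using U_lax unfolding sym_lax_monoidal_def cart_smc_def by auto

lemma n_assoc:
  "ObL a \<Longrightarrow> ObL b \<Longrightarrow> ObL c \<Longrightarrow>
   prod_arr C (n a b) (idC (Uo c)) \<cdot> n (a \<otimes> b) c = prod_arr C (idC (Uo a)) (n b c) \<cdot> n a (b \<otimes> c)"
  using U_lax unfolding sym_lax_monoidal_def cart_smc_def by simp

lemma n_unit_left: "ObL a \<Longrightarrow> prod_arr C n1 (idC (Uo a)) \<cdot> n (mUnt L) a = idC (Uo a)"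
  and n_unit_right: "ObL a \<Longrightarrow> prod_arr C (idC (Uo a)) n1 \<cdot> n a (mUnt L) = idC (Uo a)"
  using U_lax unfolding sym_lax_monoidal_def cart_smc_def by simp_all

lemma n_sym: "ObL a \<Longrightarrow> ObL b \<Longrightarrow> cswap C (Uo a) (Uo b) \<cdot> n b a = n a b \<cdot> Um (mSym L a b)"
  using U_lax unfolding sym_lax_monoidal_def cart_smc_def by simp

lemma pair_n_natural:
  assumes "ArL f" "ArL g" "Ar e1" "Ar e2" "dm e1 = dm e2" "cd e1 = Uo A" "cd e2 = Uo B"
    and "dL f = A" "dL g = B" "cL f = A'" "cL g = B'"
  shows "pair e1 e2 \<cdot> n A B \<cdot> Um (f \<oplus> g) = pair (e1 \<cdot> Um f) (e2 \<cdot> Um g) \<cdot> n A' B'"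
proof -
  have "ObL A" "ObL B" "ObL A'" "ObL B'"
    using L_dom L_cod assms(1,2,8-11) by blast+
  moreover have "pair e1 e2 \<cdot> (prod_arr C (Um f) (Um g) \<cdot> n (cL f) (cL g))
      = pair e1 e2 \<cdot> (n (dL f) (dL g) \<cdot> Um (f \<oplus> g))"
    using n_natural assms(1,2) by simp
  ultimately show ?thesis using assms by simp
qed

lemma pair_n_assoc:
  assumes "Ar e1" "Ar e2" "Ar e3" "dm e1 = dm e2" "dm e2 = dm e3"
    and "ObL P" "ObL Q" "ObL R" "cd e1 = Uo P" "cd e2 = Uo Q" "cd e3 = Uo R"
  shows "pair (pair e1 e2 \<cdot> n P Q) e3 \<cdot> n (P \<otimes> Q) R = pair e1 (pair e2 e3 \<cdot> n Q R) \<cdot> n P (Q \<otimes> R)"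
proof -
  have "pair e1 (pair e2 e3) \<cdot> (prod_arr C (n P Q) (idC (Uo R)) \<cdot> n (P \<otimes> Q) R)
      = pair e1 (pair e2 e3) \<cdot> (prod_arr C (idC (Uo P)) (n Q R) \<cdot> n P (Q \<otimes> R))"
    using n_assoc assms(6-8) by simp
  then show ?thesis using assms by simp
qed

lemma pair_n_sym:
  assumes "Ar e1" "Ar e2" "dm e1 = dm e2" "ObL P" "ObL Q" "cd e1 = Uo P" "cd e2 = Uo Q"
  shows "pair e2 e1 \<cdot> n Q P = pair e1 e2 \<cdot> n P Q \<cdot> Um (mSym L P Q)"
proof -
  have "pair e1 e2 \<cdot> (cswap C (Uo P) (Uo Q) \<cdot> n Q P) = pair e1 e2 \<cdot> (n P Q \<cdot> Um (mSym L P Q))"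
    using n_sym assms(4,5) by simp
  then show ?thesis using assms by simp
qed

lemma pair_n_unit_left:
  assumes "Ar e" "ObL P" "cd e = Uo P"
  shows "pair (bang (dm e) \<cdot> n1) e \<cdot> n (mUnt L) P = e"
proof -
  have "e \<cdot> (prod_arr C n1 (idC (Uo P)) \<cdot> n (mUnt L) P) = e \<cdot> idC (Uo P)"
    using n_unit_left assms(2) by simp
  then show ?thesis using assms by simp
qed

lemma pair_n_unit_right:
  assumes "Ar e" "ObL P" "cd e = Uo P"
  shows "pair e (bang (dm e) \<cdot> n1) \<cdot> n P (mUnt L) = e"
proof -
  have "e \<cdot> (prod_arr C (idC (Uo P)) n1 \<cdot> n P (mUnt L)) = e \<cdot> idC (Uo P)"
    using n_unit_right assms(2) by simp
  then show ?thesis using assms by simp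
qed

lemma pair_n_interchange:
  assumes a: "Ar e1" "Ar e2" "Ar e3" "Ar e4" "dm e2 = dm e1" "dm e3 = dm e1" "dm e4 = dm e1"
    "ObL P" "ObL Q" "ObL R" "ObL S" "cd e1 = Uo P" "cd e2 = Uo Q" "cd e3 = Uo R" "cd e4 = Uo S"
  shows "pair (pair e1 e2 \<cdot> n P Q) (pair e3 e4 \<cdot> n R S) \<cdot> n (P \<otimes> Q) (R \<otimes> S) \<cdot> Um ((idL P \<oplus> mSym L Q R) \<oplus> idL S)
       = pair (pair e1 e3 \<cdot> n P R) (pair e2 e4 \<cdot> n Q S) \<cdot> n (P \<otimes> R) (Q \<otimes> S)"
proof -
  have l1: "pair (pair e1 e2 \<cdot> n P Q) (pair e3 e4 \<cdot> n R S) \<cdot> n (P \<otimes> Q) (R \<otimes> S)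
      = pair e1 (pair e2 (pair e3 e4 \<cdot> n R S) \<cdot> n Q (R \<otimes> S)) \<cdot> n P (Q \<otimes> R \<otimes> S)"
    by (rule pair_n_assoc) (use a in simp_all)
  have l2: "pair e2 (pair e3 e4 \<cdot> n R S) \<cdot> n Q (R \<otimes> S) = pair (pair e2 e3 \<cdot> n Q R) e4 \<cdot> n (Q \<otimes> R) S"
    by (rule pair_n_assoc[symmetric]) (use a in simp_all)
  have r1: "pair (pair e1 e3 \<cdot> n P R) (pair e2 e4 \<cdot> n Q S) \<cdot> n (P \<otimes> R) (Q \<otimes> S)
      = pair e1 (pair e3 (pair e2 e4 \<cdot> n Q S) \<cdot> n R (Q \<otimes> S)) \<cdot> n P (R \<otimes> Q \<otimes> S)"
    by (rule pair_n_assoc) (use a in simp_all)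
  have r2: "pair e3 (pair e2 e4 \<cdot> n Q S) \<cdot> n R (Q \<otimes> S) = pair (pair e3 e2 \<cdot> n R Q) e4 \<cdot> n (R \<otimes> Q) S"
    by (rule pair_n_assoc[symmetric]) (use a in simp_all)
  have swap: "pair e2 e3 \<cdot> n Q R \<cdot> Um (mSym L Q R) = pair e3 e2 \<cdot> n R Q"
    by (rule pair_n_sym[symmetric]) (use a in simp_all)
  have inner: "pair (pair e2 e3 \<cdot> n Q R) e4 \<cdot> n (Q \<otimes> R) S \<cdot> Um (mSym L Q R \<oplus> idL S)
      = pair ((pair e2 e3 \<cdot> n Q R) \<cdot> Um (mSym L Q R)) (e4 \<cdot> Um (idL S)) \<cdot> n (R \<otimes> Q) S"
    by (rule pair_n_natural) (use a in simp_all)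
  have outer: "pair e1 (pair (pair e2 e3 \<cdot> n Q R) e4 \<cdot> n (Q \<otimes> R) S) \<cdot> n P (Q \<otimes> R \<otimes> S)
        \<cdot> Um (idL P \<oplus> (mSym L Q R \<oplus> idL S))
      = pair (e1 \<cdot> Um (idL P)) ((pair (pair e2 e3 \<cdot> n Q R) e4 \<cdot> n (Q \<otimes> R) S) \<cdot> Um (mSym L Q R \<oplus> idL S))
        \<cdot> n P (R \<otimes> Q \<otimes> S)"
    by (rule pair_n_natural) (use a in simp_all)
  have "(idL P \<oplus> mSym L Q R) \<oplus> idL S = idL P \<oplus> (mSym L Q R \<oplus> idL S)"
    using a by simp
  then have "pair (pair e1 e2 \<cdot> n P Q) (pair e3 e4 \<cdot> n R S) \<cdot> n (P \<otimes> Q) (R \<otimes> S) \<cdot> Um ((idL P \<oplus> mSym L Q R) \<oplus> idL S)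
      = pair e1 (pair (pair e2 e3 \<cdot> n Q R) e4 \<cdot> n (Q \<otimes> R) S) \<cdot> n P (Q \<otimes> R \<otimes> S)
        \<cdot> Um (idL P \<oplus> (mSym L Q R \<oplus> idL S))"
    using C_comp_eq_right[OF l1[unfolded l2], of "Um (idL P \<oplus> (mSym L Q R \<oplus> idL S))"] a by simp
  also have "\<dots> = pair e1 (pair (pair e3 e2 \<cdot> n R Q) (e4 \<cdot> Um (idL S)) \<cdot> n (R \<otimes> Q) S) \<cdot> n P (R \<otimes> Q \<otimes> S)"
    using a swap inner outer by simp
  also have "\<dots> = pair (pair e1 e3 \<cdot> n P R) (pair e2 e4 \<cdot> n Q S) \<cdot> n (P \<otimes> R) (Q \<otimes> S)"
    unfolding r1 r2 using a by simp
  finally show ?thesis .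
qed

end

section \<open>Linear-non-linear adjunctions\<close>

locale lnl_adj =
  fixes C :: "('o,'m) ccat" and L :: "('p,'n) smc"
    and Fo :: "'o \<Rightarrow> 'p" and Fm :: "'m \<Rightarrow> 'n" and Uo :: "'p \<Rightarrow> 'o" and Um :: "'n \<Rightarrow> 'm"
    and m :: "'o \<Rightarrow> 'o \<Rightarrow> 'n" and m1 :: "'n" and n :: "'p \<Rightarrow> 'p \<Rightarrow> 'm" and n1 :: "'m"
    and \<eta> :: "'o \<Rightarrow> 'm" and \<epsilon> :: "'p \<Rightarrow> 'n"
  assumes lnl: "lnl_adjunction C L Fo Fm Uo Um m m1 n n1 \<eta> \<epsilon>"

sublocale lnl_adj \<subseteq> sym_lax_to_cartesian C L Uo Um n n1
  using lnl unfolding lnl_adjunction_def by unfold_locales auto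

context lnl_adj
begin

lemma F_ob [simp]: "Ob a \<Longrightarrow> ObL (Fo a)"
  and F_ar [simp]: "Ar f \<Longrightarrow> ArL (Fm f)" "Ar f \<Longrightarrow> dL (Fm f) = Fo (dm f)" "Ar f \<Longrightarrow> cL (Fm f) = Fo (cd f)"
  and F_id [simp]: "Ob a \<Longrightarrow> Fm (idC a) = idL (Fo a)"
  and F_comp [simp]: "Ar f \<Longrightarrow> Ar g \<Longrightarrow> cd f = dm g \<Longrightarrow> Fm (f \<cdot> g) = Fm f \<bullet> Fm g"
  using lnl unfolding lnl_adjunction_def is_functor_def hom_def by auto

lemma eta_ar [simp]: "Ob X \<Longrightarrow> Ar (\<eta> X)" "Ob X \<Longrightarrow> dm (\<eta> X) = X" "Ob X \<Longrightarrow> cd (\<eta> X) = Uo (Fo X)"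
  and eta_natural: "Ar f \<Longrightarrow> f \<cdot> \<eta> (cd f) = \<eta> (dm f) \<cdot> Um (Fm f)"
  using lnl unfolding lnl_adjunction_def nat_trans_def hom_def by auto

lemma eta_monoidal:
  "Ob X \<Longrightarrow> Ob Y \<Longrightarrow> prod_arr C (\<eta> X) (\<eta> Y) \<cdot> (n (Fo X) (Fo Y) \<cdot> Um (m X Y)) = \<eta> (prd X Y)"
  and eta_monoidal_unit: "n1 \<cdot> Um m1 = \<eta> trm"
  using lnl unfolding lnl_adjunction_def by auto

lemma m_ar [simp]:
  "Ob X \<Longrightarrow> Ob Y \<Longrightarrow> ArL (m X Y)"
  "Ob X \<Longrightarrow> Ob Y \<Longrightarrow> dL (m X Y) = Fo X \<otimes> Fo Y"
  "Ob X \<Longrightarrow> Ob Y \<Longrightarrow> cL (m X Y) = Fo (prd X Y)"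
  and m1_ar [simp]: "ArL m1" "dL m1 = mUnt L" "cL m1 = Fo trm"
  using lnl unfolding lnl_adjunction_def sym_lax_monoidal_def hom_def cart_smc_def by auto

lemma inverse_arr_inv_arr: "is_iso L f \<Longrightarrow> inverse_arr L f (inv_arr L f)"
  unfolding is_iso_def inv_arr_def by (rule someI_ex)

lemma m_inv [simp]:
    "Ob X \<Longrightarrow> Ob Y \<Longrightarrow> ArL (inv_arr L (m X Y))"
    "Ob X \<Longrightarrow> Ob Y \<Longrightarrow> dL (inv_arr L (m X Y)) = Fo (prd X Y)"
    "Ob X \<Longrightarrow> Ob Y \<Longrightarrow> cL (inv_arr L (m X Y)) = Fo X \<otimes> Fo Y"
  and m_comp_inv: "Ob X \<Longrightarrow> Ob Y \<Longrightarrow> m X Y \<bullet> inv_arr L (m X Y) = idL (Fo X \<otimes> Fo Y)"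
  using inverse_arr_inv_arr[of "m X Y"] lnl unfolding lnl_adjunction_def inverse_arr_def by auto

lemma m1_inv [simp]: "ArL (inv_arr L m1)" "dL (inv_arr L m1) = Fo trm" "cL (inv_arr L m1) = mUnt L"
  and m1_comp_inv: "m1 \<bullet> inv_arr L m1 = idL (mUnt L)"
  using inverse_arr_inv_arr[of m1] lnl unfolding lnl_adjunction_def inverse_arr_def by auto

abbreviation "copyL X \<equiv> copy C L Fm m X"
abbreviation "weakL X \<equiv> weak C L Fm m1 X"

lemma copy_ar [simp]: "Ob X \<Longrightarrow> ArL (copyL X)" "Ob X \<Longrightarrow> dL (copyL X) = Fo X"
    "Ob X \<Longrightarrow> cL (copyL X) = Fo X \<otimes> Fo X"
  and weak_ar [simp]: "Ob X \<Longrightarrow> ArL (weakL X)" "Ob X \<Longrightarrow> dL (weakL X) = Fo X"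
    "Ob X \<Longrightarrow> cL (weakL X) = mUnt L"
  unfolding copy_def weak_def by simp_all

lemma eta_copy: "Ob X \<Longrightarrow> \<eta> X \<cdot> Um (copyL X) = pair (\<eta> X) (\<eta> X) \<cdot> n (Fo X) (Fo X)"
proof -
  assume X: "Ob X"
  have "\<eta> X \<cdot> Um (copyL X) = (\<eta> X \<cdot> Um (Fm (diag C X))) \<cdot> Um (inv_arr L (m X X))"
    using X unfolding copy_def by simp
  also have "\<eta> X \<cdot> Um (Fm (diag C X)) = diag C X \<cdot> \<eta> (prd X X)"
    using eta_natural[of "diag C X"] X by simp
  also have "\<eta> (prd X X) = prod_arr C (\<eta> X) (\<eta> X) \<cdot> (n (Fo X) (Fo X) \<cdot> Um (m X X))"
    using eta_monoidal X by simp
  finally have "\<eta> X \<cdot> Um (copyL X)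
      = (diag C X \<cdot> prod_arr C (\<eta> X) (\<eta> X) \<cdot> n (Fo X) (Fo X)) \<cdot> (Um (m X X) \<cdot> Um (inv_arr L (m X X)))"
    using X by simp
  also have "Um (m X X) \<cdot> Um (inv_arr L (m X X)) = idC (Uo (Fo X \<otimes> Fo X))"
    using X by (simp flip: U_comp add: m_comp_inv)
  finally show ?thesis using X by simp
qed

lemma eta_weak: "Ob X \<Longrightarrow> \<eta> X \<cdot> Um (weakL X) = bang X \<cdot> n1"
proof -
  assume X: "Ob X"
  have "\<eta> X \<cdot> Um (weakL X) = (\<eta> X \<cdot> Um (Fm (bang X))) \<cdot> Um (inv_arr L m1)"
    using X unfolding weak_def by simp
  also have "\<eta> X \<cdot> Um (Fm (bang X)) = bang X \<cdot> \<eta> trm"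
    using eta_natural[of "bang X"] X by simp
  also have "\<eta> trm = n1 \<cdot> Um m1"
    using eta_monoidal_unit by simp
  finally have "\<eta> X \<cdot> Um (weakL X) = (bang X \<cdot> n1) \<cdot> (Um m1 \<cdot> Um (inv_arr L m1))"
    using X by simp
  also have "Um m1 \<cdot> Um (inv_arr L m1) = idC (Uo (mUnt L))"
    by (simp flip: U_comp add: m1_comp_inv)
  finally show ?thesis using X by simp
qed

abbreviation "LS \<equiv> LScat C L Fo Fm m m1"
abbreviation "US \<equiv> USm C Fo Uo Um n \<eta>"

lemma LS_ar:
  "\<phi> \<in> cAr LS \<longleftrightarrow> (\<exists>X A Y B f u. \<phi> = ((X,A),(Y,B),(f,u)) \<and> Ob X \<and> ObL A \<and> Ob Y \<and> ObL B \<and>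
     Ar f \<and> dm f = X \<and> cd f = Y \<and> ArL u \<and> dL u = Fo X \<otimes> A \<and> cL u = B)"
  unfolding LScat_def hom_def by auto

lemma US_eq:
  "Ob X \<Longrightarrow> ObL A \<Longrightarrow> ArL u \<Longrightarrow> dL u = Fo X \<otimes> A \<Longrightarrow>
   US ((X,A),(Y,B),(f,u))
     = ((X,Uo A),(Y,Uo B),(f, pair (pr1 X (Uo A) \<cdot> \<eta> X) (pr2 X (Uo A)) \<cdot> n (Fo X) A \<cdot> Um u))"
  unfolding USm_def USo_def src_def tgt_def base_def fibc_def by simp

lemma US_id_fibre:
  assumes X: "Ob X" and A: "ObL A"
  shows "pair (pr1 X (Uo A) \<cdot> \<eta> X) (pr2 X (Uo A)) \<cdot> n (Fo X) A \<cdot> Um (weakL X \<oplus> idL A) = pr2 X (Uo A)"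
proof -
  have "pair (pr1 X (Uo A) \<cdot> \<eta> X) (pr2 X (Uo A)) \<cdot> n (Fo X) A \<cdot> Um (weakL X \<oplus> idL A)
      = pair ((pr1 X (Uo A) \<cdot> \<eta> X) \<cdot> Um (weakL X)) (pr2 X (Uo A) \<cdot> Um (idL A)) \<cdot> n (mUnt L) A"
    by (rule pair_n_natural) (use X A in simp_all)
  also have "\<dots> = pair (bang (prd X (Uo A)) \<cdot> n1) (pr2 X (Uo A)) \<cdot> n (mUnt L) A"
    using X A eta_weak[OF X] by simp
  also have "\<dots> = pr2 X (Uo A)"
    using pair_n_unit_left[of "pr2 X (Uo A)" A] X A by simp
  finally show ?thesis .
qed

lemma US_comp_fibre:
  assumes X: "Ob X" and Y: "Ob Y" and A: "ObL A" and B: "ObL B" and f: "Ar f" "dm f = X" "cd f = Y"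
    and u: "ArL u" "dL u = Fo X \<otimes> A" "cL u = B"
  shows "pair (pr1 X (Uo A) \<cdot> f \<cdot> \<eta> Y) (pair (pr1 X (Uo A) \<cdot> \<eta> X) (pr2 X (Uo A)) \<cdot> n (Fo X) A \<cdot> Um u)
           \<cdot> n (Fo Y) B
       = pair (pr1 X (Uo A) \<cdot> \<eta> X) (pr2 X (Uo A)) \<cdot> n (Fo X) A \<cdot> Um (copyL X \<oplus> idL A) \<cdot> Um (Fm f \<oplus> u)"
proof -
  define e where "e = pr1 X (Uo A) \<cdot> \<eta> X"
  define q where "q = pr2 X (Uo A)"
  have ty: "Ar e" "dm e = prd X (Uo A)" "cd e = Uo (Fo X)" "Ar q" "dm q = prd X (Uo A)" "cd q = Uo A"
    unfolding e_def q_def using X A by simp_all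
  note ok = X Y A B f u ty
  have "pr1 X (Uo A) \<cdot> f \<cdot> \<eta> Y = e \<cdot> Um (Fm f)"
    unfolding e_def using eta_natural[of f] f X A by simp
  then have "pair (pr1 X (Uo A) \<cdot> f \<cdot> \<eta> Y) (pair e q \<cdot> n (Fo X) A \<cdot> Um u) \<cdot> n (Fo Y) B
      = pair (e \<cdot> Um (Fm f)) ((pair e q \<cdot> n (Fo X) A) \<cdot> Um u) \<cdot> n (Fo Y) B"
    using ok by simp
  also have "\<dots> = pair e (pair e q \<cdot> n (Fo X) A) \<cdot> n (Fo X) (Fo X \<otimes> A) \<cdot> Um (Fm f \<oplus> u)"
    by (rule pair_n_natural[symmetric]) (use ok in simp_all)
  also have "\<dots> = pair (pair e e \<cdot> n (Fo X) (Fo X)) q \<cdot> n (Fo X \<otimes> Fo X) A \<cdot> Um (Fm f \<oplus> u)"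
    by (rule C_comp_eq_right[OF pair_n_assoc[symmetric]]) (use ok in simp_all)
  also have "\<dots> = pair (e \<cdot> Um (copyL X)) (q \<cdot> Um (idL A)) \<cdot> n (Fo X \<otimes> Fo X) A \<cdot> Um (Fm f \<oplus> u)"
    unfolding e_def using eta_copy[OF X] ok by (simp add: e_def)
  also have "\<dots> = pair e q \<cdot> n (Fo X) A \<cdot> Um (copyL X \<oplus> idL A) \<cdot> Um (Fm f \<oplus> u)"
  proof -
    have "pair e q \<cdot> n (Fo X) A \<cdot> Um (copyL X \<oplus> idL A)
        = pair (e \<cdot> Um (copyL X)) (q \<cdot> Um (idL A)) \<cdot> n (Fo X \<otimes> Fo X) A"
      by (rule pair_n_natural) (use ok in simp_all)
    from C_comp_eq_right[OF this, of "Um (Fm f \<oplus> u)"] show ?thesis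
      using ok by simp
  qed
  finally show ?thesis unfolding e_def q_def .
qed

lemma US_id: "a \<in> cOb LS \<Longrightarrow> US (cId LS a) = cId (Scat C) (USo Uo a)"
proof -
  assume "a \<in> cOb LS"
  then obtain X A where a: "a = (X,A)" "Ob X" "ObL A" by (auto simp: LScat_def)
  have "cId LS a = ((X,A),(X,A),(idC X, weakL X \<oplus> idL A))"
    by (simp add: LScat_def a)
  then show ?thesis
    using a US_id_fibre[OF a(2,3)] by (simp add: Scat_def USo_def US_eq)
qed

lemma US_comp:
  assumes "\<phi> \<in> cAr LS" "\<psi> \<in> cAr LS" and cc: "cCod LS \<phi> = cDom LS \<psi>"
  shows "US (cCmp LS \<phi> \<psi>) = cCmp (Scat C) (US \<phi>) (US \<psi>)"
proof -
  obtain X A Y B f u where \<phi>: "\<phi> = ((X,A),(Y,B),(f,u))" and t: "Ob X" "ObL A" "Ob Y" "ObL B"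
    "Ar f" "dm f = X" "cd f = Y" "ArL u" "dL u = Fo X \<otimes> A" "cL u = B"
    using assms(1) unfolding LS_ar by blast
  obtain Y' B' Z D g v where \<psi>: "\<psi> = ((Y',B'),(Z,D),(g,v))" and t': "Ob Y'" "ObL B'" "Ob Z" "ObL D"
    "Ar g" "dm g = Y'" "cd g = Z" "ArL v" "dL v = Fo Y' \<otimes> B'" "cL v = D"
    using assms(2) unfolding LS_ar by blast
  have YB: "Y' = Y" "B' = B"
    using cc unfolding \<phi> \<psi> by (simp_all add: LScat_def src_def tgt_def)
  have comp: "cCmp LS \<phi> \<psi> = ((X,A),(Z,D),(f \<cdot> g, ((copyL X \<oplus> idL A) \<bullet> (Fm f \<oplus> u)) \<bullet> v))"
    unfolding \<phi> \<psi> by (simp add: LScat_def src_def tgt_def base_def fibc_def)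
  have ty: "ArL (((copyL X \<oplus> idL A) \<bullet> (Fm f \<oplus> u)) \<bullet> v)"
    "dL (((copyL X \<oplus> idL A) \<bullet> (Fm f \<oplus> u)) \<bullet> v) = Fo X \<otimes> A"
    using t t' YB by simp_all
  show ?thesis
    unfolding comp US_eq[OF t(1,2) ty] unfolding \<phi> \<psi> YB US_eq[OF t(1,2,8,9)] US_eq[OF t(3,4) t'(8) t'(9)[unfolded YB]]
    using C_comp_eq_right[OF US_comp_fibre[OF t(1,3,2,4) t(5-10)], of "Um v"] t t' YB
    by (simp add: Scat_def src_def tgt_def base_def fibc_def)
qed

lemma US_functor: "is_functor LS (Scat C) (USo Uo) US"
  unfolding is_functor_def
proof (intro conjI ballI impI)
  fix a assume "a \<in> cOb LS"
  then show "USo Uo a \<in> cOb (Scat C)"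
    by (auto simp: LScat_def Scat_def USo_def)
next
  fix \<phi> assume "\<phi> \<in> cAr LS"
  then obtain X A Y B f u where \<phi>: "\<phi> = ((X,A),(Y,B),(f,u))" and t: "Ob X" "ObL A" "Ob Y" "ObL B"
    "Ar f" "dm f = X" "cd f = Y" "ArL u" "dL u = Fo X \<otimes> A" "cL u = B"
    unfolding LS_ar by blast
  show "US \<phi> \<in> hom (Scat C) (USo Uo (cDom LS \<phi>)) (USo Uo (cCod LS \<phi>))"
    unfolding \<phi> US_eq[OF t(1,2,8,9)] using t
    by (simp add: hom_def Scat_def LScat_def USo_def src_def tgt_def)
qed (simp_all add: US_id US_comp)

lemma US_lscart: "Ar f \<Longrightarrow> ObL B \<Longrightarrow> US (lscart C L Fm m1 f B) = scart C f (Uo B)"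
  unfolding lscart_def scart_def by (subst US_eq) (simp_all add: US_id_fibre)

lemma US_tensor_fibre:
  assumes X: "Ob X" and o: "ObL A" "ObL A'" "ObL B" "ObL B'"
    and u: "ArL u" "dL u = Fo X \<otimes> A" "cL u = A'" and v: "ArL v" "dL v = Fo X \<otimes> B" "cL v = B'"
    and p: "Ar p" "cd p = X" and ab: "Ar a" "Ar b" "dm a = dm p" "dm b = dm p" "cd a = Uo A" "cd b = Uo B"
  shows "pair (pair (p \<cdot> \<eta> X) a \<cdot> n (Fo X) A \<cdot> Um u) (pair (p \<cdot> \<eta> X) b \<cdot> n (Fo X) B \<cdot> Um v) \<cdot> n A' B'
    = pair (p \<cdot> \<eta> X) (pair a b \<cdot> n A B) \<cdot> n (Fo X) (A \<otimes> B) \<cdot> Um (copyL X \<oplus> idL (A \<otimes> B))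
       \<cdot> Um (idL (Fo X) \<oplus> mSym L (Fo X) A \<oplus> idL B) \<cdot> Um (u \<oplus> v)"
proof -
  define e where "e = p \<cdot> \<eta> X"
  have te: "Ar e" "dm e = dm p" "cd e = Uo (Fo X)"
    unfolding e_def using X p by simp_all
  note ok = X o u v p ab te
  have split: "pair ((pair e a \<cdot> n (Fo X) A) \<cdot> Um u) ((pair e b \<cdot> n (Fo X) B) \<cdot> Um v) \<cdot> n A' B'
      = pair (pair e a \<cdot> n (Fo X) A) (pair e b \<cdot> n (Fo X) B) \<cdot> n (Fo X \<otimes> A) (Fo X \<otimes> B) \<cdot> Um (u \<oplus> v)"
    by (rule pair_n_natural[symmetric]) (use ok in simp_all)
  have shuffle: "pair (pair e e \<cdot> n (Fo X) (Fo X)) (pair a b \<cdot> n A B) \<cdot> n (Fo X \<otimes> Fo X) (A \<otimes> B)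
        \<cdot> Um ((idL (Fo X) \<oplus> mSym L (Fo X) A) \<oplus> idL B)
      = pair (pair e a \<cdot> n (Fo X) A) (pair e b \<cdot> n (Fo X) B) \<cdot> n (Fo X \<otimes> A) (Fo X \<otimes> B)"
    by (rule pair_n_interchange) (use ok in simp_all)
  have copy: "pair e (pair a b \<cdot> n A B) \<cdot> n (Fo X) (A \<otimes> B) \<cdot> Um (copyL X \<oplus> idL (A \<otimes> B))
      = pair (e \<cdot> Um (copyL X)) ((pair a b \<cdot> n A B) \<cdot> Um (idL (A \<otimes> B))) \<cdot> n (Fo X \<otimes> Fo X) (A \<otimes> B)"
    by (rule pair_n_natural) (use ok in simp_all)
  have "pair (pair e a \<cdot> n (Fo X) A \<cdot> Um u) (pair e b \<cdot> n (Fo X) B \<cdot> Um v) \<cdot> n A' B'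
      = pair (pair e a \<cdot> n (Fo X) A) (pair e b \<cdot> n (Fo X) B) \<cdot> n (Fo X \<otimes> A) (Fo X \<otimes> B) \<cdot> Um (u \<oplus> v)"
    using split ok by simp
  also have "\<dots> = pair (pair e e \<cdot> n (Fo X) (Fo X)) (pair a b \<cdot> n A B) \<cdot> n (Fo X \<otimes> Fo X) (A \<otimes> B)
      \<cdot> Um (idL (Fo X) \<oplus> mSym L (Fo X) A \<oplus> idL B) \<cdot> Um (u \<oplus> v)"
    using C_comp_eq_right[OF shuffle, of "Um (u \<oplus> v)"] ok by simp
  also have "\<dots> = pair (e \<cdot> Um (copyL X)) (pair a b \<cdot> n A B) \<cdot> n (Fo X \<otimes> Fo X) (A \<otimes> B)
      \<cdot> Um (idL (Fo X) \<oplus> mSym L (Fo X) A \<oplus> idL B) \<cdot> Um (u \<oplus> v)"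
    unfolding e_def using eta_copy[OF X] X p by simp
  also have "\<dots> = pair e (pair a b \<cdot> n A B) \<cdot> n (Fo X) (A \<otimes> B) \<cdot> Um (copyL X \<oplus> idL (A \<otimes> B))
      \<cdot> Um (idL (Fo X) \<oplus> mSym L (Fo X) A \<oplus> idL B) \<cdot> Um (u \<oplus> v)"
    using C_comp_eq_right[OF copy, of "Um (idL (Fo X) \<oplus> mSym L (Fo X) A \<oplus> idL B) \<cdot> Um (u \<oplus> v)"] ok
    by simp
  finally show ?thesis unfolding e_def .
qed

abbreviation "LF X \<equiv> LSfib C L Fo Fm m m1 X"
abbreviation "SF X \<equiv> Sfib C X"

lemma LF_simps:
  "cOb (LF X) = {X} \<times> cOb L"
  "cAr (LF X) = {\<phi> \<in> cAr LS. fst (src \<phi>) = X \<and> fst (tgt \<phi>) = X \<and> base \<phi> = idC X}"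
  "cDom (LF X) = src" "cCod (LF X) = tgt" "cId (LF X) = cId LS" "cCmp (LF X) = cCmp LS"
  "mTns (LF X) = (\<lambda>a b. (X, snd a \<otimes> snd b))"
  "mUnt (LF X) = (X, mUnt L)"
  "mTnsA (LF X) = (\<lambda>\<phi> \<psi>. ((X, snd (src \<phi>) \<otimes> snd (src \<psi>)), (X, snd (tgt \<phi>) \<otimes> snd (tgt \<psi>)),
     (idC X,
      ((copyL X \<oplus> idL (snd (src \<phi>) \<otimes> snd (src \<psi>))) \<bullet>
       ((idL (Fo X) \<oplus> mSym L (Fo X) (snd (src \<phi>))) \<oplus> idL (snd (src \<psi>)))) \<bullet> (fibc \<phi> \<oplus> fibc \<psi>))))"
  "mSym (LF X) = (\<lambda>a b. ((X, snd a \<otimes> snd b), (X, snd b \<otimes> snd a),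
     (idC X, weakL X \<oplus> mSym L (snd a) (snd b))))"
  unfolding LSfib_def Let_def by (simp_all add: LScat_def)

lemma SF_simps:
  "cOb (SF X) = {X} \<times> cOb C"
  "cAr (SF X) = {\<phi> \<in> cAr (Scat C). fst (src \<phi>) = X \<and> fst (tgt \<phi>) = X \<and> base \<phi> = idC X}"
  "cDom (SF X) = src" "cCod (SF X) = tgt" "cId (SF X) = cId (Scat C)" "cCmp (SF X) = cCmp (Scat C)"
  "mTns (SF X) = (\<lambda>a b. (X, prd (snd a) (snd b)))"
  "mTnsA (SF X) = (\<lambda>\<phi> \<psi>. ((X, prd (snd (src \<phi>)) (snd (src \<psi>))), (X, prd (snd (tgt \<phi>)) (snd (tgt \<psi>))),
     (idC X, pair
        (prod_arr C (idC X) (pr1 (snd (src \<phi>)) (snd (src \<psi>))) \<cdot> fibc \<phi>)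
        (prod_arr C (idC X) (pr2 (snd (src \<phi>)) (snd (src \<psi>))) \<cdot> fibc \<psi>))))"
  "mUnt (SF X) = (X, trm)"
  "mSym (SF X) = (\<lambda>a b. ((X, prd (snd a) (snd b)), (X, prd (snd b) (snd a)),
     (idC X, pr2 X (prd (snd a) (snd b)) \<cdot> cswap C (snd a) (snd b))))"
  unfolding Sfib_def by (simp_all add: Scat_def del: prod_arr_def cswap_def)

lemma LF_ar:
  "Ob X \<Longrightarrow> \<phi> \<in> cAr (LF X) \<longleftrightarrow> (\<exists>A B u. \<phi> = ((X,A),(X,B),(idC X,u)) \<and> ObL A \<and> ObL B \<and>
     ArL u \<and> dL u = Fo X \<otimes> A \<and> cL u = B)"
  unfolding LF_simps LS_ar by (auto simp: src_def tgt_def base_def)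

lemma US_fibre_functor:
  assumes X: "Ob X"
  shows "is_functor (LF X) (SF X) (USo Uo) US"
  unfolding is_functor_def
proof (intro conjI ballI impI)
  fix a assume "a \<in> cOb (LF X)"
  then show "USo Uo a \<in> cOb (SF X)"
    using X by (auto simp: LF_simps SF_simps USo_def)
next
  fix \<phi> assume "\<phi> \<in> cAr (LF X)"
  then obtain A B u where \<phi>: "\<phi> = ((X,A),(X,B),(idC X,u))"
    and t: "ObL A" "ObL B" "ArL u" "dL u = Fo X \<otimes> A" "cL u = B"
    unfolding LF_ar[OF X] by blast
  have "\<phi> \<in> cAr LS"
    unfolding \<phi> LS_ar using X t by auto
  then have "US \<phi> \<in> hom (Scat C) (USo Uo (cDom LS \<phi>)) (USo Uo (cCod LS \<phi>))"
    using US_functor unfolding is_functor_def by blast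
  then show "US \<phi> \<in> hom (SF X) (USo Uo (cDom (LF X) \<phi>)) (USo Uo (cCod (LF X) \<phi>))"
    unfolding hom_def LF_simps SF_simps \<phi> US_eq[OF X t(1,3,4)]
    by (simp add: LScat_def Scat_def src_def tgt_def base_def USo_def)
next
  fix a assume "a \<in> cOb (LF X)"
  then have "a \<in> cOb LS"
    using X by (auto simp: LF_simps LScat_def)
  then show "US (cId (LF X) a) = cId (SF X) (USo Uo a)"
    unfolding LF_simps SF_simps by (rule US_id)
next
  fix f g assume "f \<in> cAr (LF X)" "g \<in> cAr (LF X)" "cCod (LF X) f = cDom (LF X) g"
  then have "f \<in> cAr LS" "g \<in> cAr LS" "cCod LS f = cDom LS g"
    by (auto simp: LF_simps LScat_def)
  then show "US (cCmp (LF X) f g) = cCmp (SF X) (US f) (US g)"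
    unfolding LF_simps SF_simps by (rule US_comp)
qed

lemma US_mult_natural:
  assumes X: "Ob X" and "\<phi> \<in> cAr (LF X)" "\<psi> \<in> cAr (LF X)"
  shows "cCmp (SF X) (mTnsA (SF X) (US \<phi>) (US \<psi>)) (US_mult C L Uo n X (cCod (LF X) \<phi>) (cCod (LF X) \<psi>))
       = cCmp (SF X) (US_mult C L Uo n X (cDom (LF X) \<phi>) (cDom (LF X) \<psi>)) (US (mTnsA (LF X) \<phi> \<psi>))"
proof -
  obtain A A' u B B' v where \<phi>: "\<phi> = ((X,A),(X,A'),(idC X,u))" and \<psi>: "\<psi> = ((X,B),(X,B'),(idC X,v))"
    and t: "ObL A" "ObL A'" "ArL u" "dL u = Fo X \<otimes> A" "cL u = A'"
      "ObL B" "ObL B'" "ArL v" "dL v = Fo X \<otimes> B" "cL v = B'"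
    using assms(2,3) unfolding LF_ar[OF X] by blast
  let ?W = "prd (Uo A) (Uo B)"
  show ?thesis
    unfolding LF_simps SF_simps \<phi> \<psi> using X t
    apply (simp add: US_eq US_mult_def Scat_def src_def tgt_def base_def fibc_def)
    using US_tensor_fibre[OF X t(1,2,6,7,3,4,5,8,9,10), of "pr1 X ?W" "pr2 X ?W \<cdot> pr1 (Uo A) (Uo B)"
        "pr2 X ?W \<cdot> pr2 (Uo A) (Uo B)"]
    by (simp add: C_pair_eta[of "Uo A" "Uo B" "pr2 X ?W"])
qed

lemma US_mult_assoc:
  assumes X: "Ob X" and "a \<in> cOb (LF X)" "b \<in> cOb (LF X)" "c \<in> cOb (LF X)"
  shows "cCmp (SF X) (mTnsA (SF X) (US_mult C L Uo n X a b) (cId (SF X) (USo Uo c)))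
          (US_mult C L Uo n X (mTns (LF X) a b) c)
       = cCmp (SF X) (mTnsA (SF X) (cId (SF X) (USo Uo a)) (US_mult C L Uo n X b c))
          (US_mult C L Uo n X a (mTns (LF X) b c))"
proof -
  obtain A B D where abc: "a = (X,A)" "b = (X,B)" "c = (X,D)" and t: "ObL A" "ObL B" "ObL D"
    using assms(2-4) unfolding LF_simps by auto
  let ?W = "prd (Uo A) (prd (Uo B) (Uo D))"
  show ?thesis
    unfolding LF_simps SF_simps abc using X t
    apply (simp add: US_mult_def USo_def Scat_def src_def tgt_def base_def fibc_def)
    using pair_n_assoc[of "pr2 X ?W \<cdot> pr1 (Uo A) (prd (Uo B) (Uo D))"
        "pr2 X ?W \<cdot> pr2 (Uo A) (prd (Uo B) (Uo D)) \<cdot> pr1 (Uo B) (Uo D)"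
        "pr2 X ?W \<cdot> pr2 (Uo A) (prd (Uo B) (Uo D)) \<cdot> pr2 (Uo B) (Uo D)" A B D]
    by (simp add: C_pair_eta_comp[of "pr2 X ?W" "pr2 (Uo A) (prd (Uo B) (Uo D))" "Uo B" "Uo D"])
qed

lemma US_unit_left:
  assumes X: "Ob X" and "a \<in> cOb (LF X)"
  shows "cCmp (SF X) (mTnsA (SF X) (US_unit C L Uo n1 X) (cId (SF X) (USo Uo a)))
          (US_mult C L Uo n X (mUnt (LF X)) a) = cId (SF X) (USo Uo a)"
proof -
  obtain A where a: "a = (X,A)" "ObL A"
    using assms(2) unfolding LF_simps by auto
  show ?thesis
    unfolding LF_simps SF_simps a(1) using X a(2)
    apply (simp add: US_mult_def US_unit_def USo_def Scat_def src_def tgt_def base_def fibc_def)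
    using pair_n_unit_left[of "pr2 X (Uo A)" A] by simp
qed

lemma US_unit_right:
  assumes X: "Ob X" and "a \<in> cOb (LF X)"
  shows "cCmp (SF X) (mTnsA (SF X) (cId (SF X) (USo Uo a)) (US_unit C L Uo n1 X))
          (US_mult C L Uo n X a (mUnt (LF X))) = cId (SF X) (USo Uo a)"
proof -
  obtain A where a: "a = (X,A)" "ObL A"
    using assms(2) unfolding LF_simps by auto
  show ?thesis
    unfolding LF_simps SF_simps a(1) using X a(2)
    apply (simp add: US_mult_def US_unit_def USo_def Scat_def src_def tgt_def base_def fibc_def)
    using pair_n_unit_right[of "pr2 X (Uo A)" A] by simp
qed

lemma US_mult_sym:
  assumes X: "Ob X" and "a \<in> cOb (LF X)" "b \<in> cOb (LF X)"
  shows "cCmp (SF X) (mSym (SF X) (USo Uo a) (USo Uo b)) (US_mult C L Uo n X b a)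
       = cCmp (SF X) (US_mult C L Uo n X a b) (US (mSym (LF X) a b))"
proof -
  obtain A B where ab: "a = (X,A)" "b = (X,B)" and t: "ObL A" "ObL B"
    using assms(2,3) unfolding LF_simps by auto
  let ?W = "prd (Uo A) (Uo B)"
  have weaken: "pair (pr1 X ?W \<cdot> \<eta> X) (pr2 X ?W \<cdot> n A B) \<cdot> n (Fo X) (A \<otimes> B) \<cdot> Um (weakL X \<oplus> mSym L A B)
      = pair ((pr1 X ?W \<cdot> \<eta> X) \<cdot> Um (weakL X)) ((pr2 X ?W \<cdot> n A B) \<cdot> Um (mSym L A B)) \<cdot> n (mUnt L) (B \<otimes> A)"
    by (rule pair_n_natural) (use X t in simp_all)
  show ?thesis
    unfolding LF_simps SF_simps ab using X t
    apply (simp add: US_eq US_mult_def USo_def Scat_def src_def tgt_def base_def fibc_def)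
    using weaken pair_n_unit_left[of "pr2 X ?W \<cdot> n A B \<cdot> Um (mSym L A B)" "B \<otimes> A"] eta_weak[OF X]
      pair_n_sym[of "pr2 X ?W \<cdot> pr1 (Uo A) (Uo B)" "pr2 X ?W \<cdot> pr2 (Uo A) (Uo B)" A B] X t
    by (simp add: C_pair_eta[of "Uo A" "Uo B" "pr2 X ?W"])
qed

lemma US_fibre_sym_lax_monoidal:
  assumes X: "Ob X"
  shows "sym_lax_monoidal (LF X) (SF X) (USo Uo) US (US_mult C L Uo n X) (US_unit C L Uo n1 X)"
  unfolding sym_lax_monoidal_def
proof (intro conjI ballI)
  fix a b assume "a \<in> cOb (LF X)" "b \<in> cOb (LF X)"
  then show "US_mult C L Uo n X a b \<in> hom (SF X) (mTns (SF X) (USo Uo a) (USo Uo b)) (USo Uo (mTns (LF X) a b))"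
    using X unfolding hom_def LF_simps SF_simps
    by (auto simp: US_mult_def Scat_def USo_def src_def tgt_def base_def hom_def)
next
  show "US_unit C L Uo n1 X \<in> hom (SF X) (mUnt (SF X)) (USo Uo (mUnt (LF X)))"
    using X unfolding hom_def LF_simps SF_simps
    by (auto simp: US_unit_def Scat_def USo_def src_def tgt_def base_def hom_def)
qed (use X in \<open>simp_all add: US_fibre_functor US_mult_natural US_mult_assoc US_unit_left US_unit_right
  US_mult_sym\<close>)

end

theorem proposition3p11:
  fixes C :: "('o,'m) ccat" and L :: "('p,'n) smc"
    and Fo :: "'o \<Rightarrow> 'p" and Fm :: "'m \<Rightarrow> 'n" and Uo :: "'p \<Rightarrow> 'o" and Um :: "'n \<Rightarrow> 'm"
    and m :: "'o \<Rightarrow> 'o \<Rightarrow> 'n" and m1 :: "'n" and n :: "'p \<Rightarrow> 'p \<Rightarrow> 'm" and n1 :: "'m"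
    and \<eta> :: "'o \<Rightarrow> 'm" and \<epsilon> :: "'p \<Rightarrow> 'n"
  assumes "lnl_adjunction C L Fo Fm Uo Um m m1 n n1 \<eta> \<epsilon>"
  shows "is_functor (LScat C L Fo Fm m m1) (Scat C) (USo Uo) (USm C Fo Uo Um n \<eta>)
    \<and> (\<forall>a\<in>cOb (LScat C L Fo Fm m m1). fst (USo Uo a) = fst a)
    \<and> (\<forall>\<phi>\<in>cAr (LScat C L Fo Fm m m1). base (USm C Fo Uo Um n \<eta> \<phi>) = base \<phi>)
    \<and> (\<forall>f\<in>cAr C. \<forall>B\<in>cOb L. USm C Fo Uo Um n \<eta> (lscart C L Fm m1 f B) = scart C f (Uo B))
    \<and> (\<forall>X\<in>cOb C. sym_lax_monoidal (LSfib C L Fo Fm m m1 X) (Sfib C X) (USo Uo) (USm C Fo Uo Um n \<eta>)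
                    (US_mult C L Uo n X) (US_unit C L Uo n1 X))"
proof -
  interpret lnl_adj C L Fo Fm Uo Um m m1 n n1 \<eta> \<epsilon>
    by (rule lnl_adj.intro) (rule assms)
  show ?thesis
    using US_functor US_lscart US_fibre_sym_lax_monoidal by (auto simp: USo_def USm_def base_def)
qed

end
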